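(* Let $Q$ be a quiver and let $A,B,C\in\mathbb{C}\bar Q$ represent elements of $\mathcal{V}^rQ$, $\mathcal{V}^sQ$ and $\mathcal{V}^tQ$ respectively. Then the Schouten bracket $[\,,\,]_{\mathcal V}$ on $\mathcal{V}Q$ satisfies: (i) $[A,B]_{\mathcal V}=-(-1)^{(r-1)(s-1)}[B,A]_{\mathcal V}$; (ii) $(-1)^{(r-1)(t-1)}[A,[B,C]_{\mathcal V}]_{\mathcal V}+(-1)^{(s-1)(r-1)}[B,[C,A]_{\mathcal V}]_{\mathcal V}+(-1)^{(t-1)(s-1)}[C,[A,B]_{\mathcal V}]_{\mathcal V}=0.$
   Context: A quiver $Q$ has a finite vertex set $I=\{1,\dots,k\}$ and a finite set of arrows (also denoted $Q$) with head and tail maps $h,t:Q\to I$. The path algebra $\mathbb{C}Q$ has as basis the paths in $Q$ (including a trivial path $e_i$ at each vertex $i$), multiplication being concatenation written from right to left (a product $xy$ of arrows is nonzero iff $t(x)=h(y)$; $e_{h(a)}a=a=ae_{t(a)}$). The double quiver $\bar Q$ has arrows $Q\cup\{a^*:a\in Q\}$ with $h(a^* )=t(a)$, $t(a^* )=h(a)$. Let $\mathbb{C}\bar Q^r\subset\mathbb{C}\bar Q$ be the span of paths containing exactly $r$ starred arrows. Let $\mathcal{V}Q$ be the quotient of $\mathbb{C}\bar Q$ by the linear span of all $PR-(-1)^{pr}RP$ with $P\in\mathbb{C}\bar Q^p$, $R\in\mathbb{C}\bar Q^r$; it is graded, $\mathcal{V}Q=\bigoplus_r\mathcal{V}^rQ$.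 For $w\in\bar Q$ and a path $x_1\cdots x_n$ ($x_i\in\bar Q$) set $D_w(x_1\cdots x_n)=\sum_{i:\,x_i=w}(-1)^{\lambda_i\mu_i}x_{i+1}\cdots x_nx_1\cdots x_{i-1}$, where $\lambda_i$ (resp. $\mu_i$) is the number of starred arrows among $x_{i+1},\dots,x_n$ (resp. among $x_1,\dots,x_i$), extended linearly. For $\gamma\in\mathcal{V}^rQ$, $\delta\in\mathcal{V}^sQ$ the Schouten bracket is $[\gamma,\delta]_{\mathcal V}=\sum_{a\in Q}\big(D_{a^*}(\gamma)D_a(\delta)-(-1)^{(r-1)(s-1)}D_{a^*}(\delta)D_a(\gamma)\big)$, taken modulo the relations defining $\mathcal{V}Q$. *)

theory Defs
  imports Complex_Main
begin

text \<open>Arrows of the double quiver: an original arrow a or a starred arrow a*.\<close>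
datatype 'a darrow = Orig 'a | Star 'a

text \<open>Paths: a trivial path e_i at a vertex, or a nonempty word x_1 ... x_n of
  double-quiver arrows (composition right to left: t(x_k) = h(x_(k+1))).\<close>
datatype ('v,'a) qpath = Triv 'v | Arr "'a darrow list"

fun dh :: "('a \<Rightarrow> 'v) \<Rightarrow> ('a \<Rightarrow> 'v) \<Rightarrow> 'a darrow \<Rightarrow> 'v" where
  "dh hh tt (Orig a) = hh a"
| "dh hh tt (Star a) = tt a"

fun dt :: "('a \<Rightarrow> 'v) \<Rightarrow> ('a \<Rightarrow> 'v) \<Rightarrow> 'a darrow \<Rightarrow> 'v" where
  "dt hh tt (Orig a) = tt a"
| "dt hh tt (Star a) = hh a"

fun base_arrow :: "'a darrow \<Rightarrow> 'a" where
  "base_arrow (Orig a) = a"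
| "base_arrow (Star a) = a"

fun is_star :: "'a darrow \<Rightarrow> bool" where
  "is_star (Orig a) = False"
| "is_star (Star a) = True"

definition nstars :: "'a darrow list \<Rightarrow> nat" where
  "nstars xs = length (filter is_star xs)"

fun path_stars :: "('v,'a) qpath \<Rightarrow> nat" where
  "path_stars (Triv i) = 0"
| "path_stars (Arr xs) = nstars xs"

fun valid_path :: "'v set \<Rightarrow> 'a set \<Rightarrow> ('a \<Rightarrow> 'v) \<Rightarrow> ('a \<Rightarrow> 'v) \<Rightarrow> ('v,'a) qpath \<Rightarrow> bool" where
  "valid_path I Q hh tt (Triv i) = (i \<in> I)"
| "valid_path I Q hh tt (Arr xs) = (xs \<noteq> [] \<and> (\<forall>x\<in>set xs. base_arrow x \<in> Q) \<and>
      (\<forall>k. Suc k < length xs \<longrightarrow> dt hh tt (xs ! k) = dh hh tt (xs ! Suc k)))"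

text \<open>Product of two paths p q (p to the left); None means the product is zero.\<close>
fun pmul :: "('a \<Rightarrow> 'v) \<Rightarrow> ('a \<Rightarrow> 'v) \<Rightarrow> ('v,'a) qpath \<Rightarrow> ('v,'a) qpath \<Rightarrow> ('v,'a) qpath option" where
  "pmul hh tt (Triv i) (Triv j) = (if i = j then Some (Triv i) else None)"
| "pmul hh tt (Triv i) (Arr ys) = (if i = dh hh tt (hd ys) then Some (Arr ys) else None)"
| "pmul hh tt (Arr xs) (Triv j) = (if dt hh tt (last xs) = j then Some (Arr xs) else None)"
| "pmul hh tt (Arr xs) (Arr ys) = (if dt hh tt (last xs) = dh hh tt (hd ys) then Some (Arr (xs @ ys)) else None)"

text \<open>Elements of the path algebra C Qbar: finitely supported coefficient functions on paths.\<close>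
type_synonym ('v,'a) elt = "('v,'a) qpath \<Rightarrow> complex"

definition in_CQ :: "'v set \<Rightarrow> 'a set \<Rightarrow> ('a \<Rightarrow> 'v) \<Rightarrow> ('a \<Rightarrow> 'v) \<Rightarrow> ('v,'a) elt \<Rightarrow> bool" where
  "in_CQ I Q hh tt f \<longleftrightarrow> finite {p. f p \<noteq> 0} \<and> (\<forall>p. f p \<noteq> 0 \<longrightarrow> valid_path I Q hh tt p)"

text \<open>The graded piece C Qbar^r: spanned by paths with exactly r starred arrows.\<close>
definition graded :: "'v set \<Rightarrow> 'a set \<Rightarrow> ('a \<Rightarrow> 'v) \<Rightarrow> ('a \<Rightarrow> 'v) \<Rightarrow> nat \<Rightarrow> ('v,'a) elt set" where
  "graded I Q hh tt r = {f. in_CQ I Q hh tt f \<and> (\<forall>p. f p \<noteq> 0 \<longrightarrow> path_stars p = r)}"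

definition basis :: "('v,'a) qpath \<Rightarrow> ('v,'a) elt" where
  "basis p = (\<lambda>q. if q = p then 1 else 0)"

definition emul :: "('a \<Rightarrow> 'v) \<Rightarrow> ('a \<Rightarrow> 'v) \<Rightarrow> ('v,'a) elt \<Rightarrow> ('v,'a) elt \<Rightarrow> ('v,'a) elt" where
  "emul hh tt f g = (\<lambda>p. \<Sum>(p1,p2) \<in> {(p1,p2). f p1 \<noteq> 0 \<and> g p2 \<noteq> 0 \<and> pmul hh tt p1 p2 = Some p}.
                         f p1 * g p2)"

definition sgnc :: "int \<Rightarrow> complex" where
  "sgnc e = (if even e then 1 else -1)"

definition word :: "'v \<Rightarrow> 'a darrow list \<Rightarrow> ('v,'a) elt" where
  "word v ys = (if ys = [] then basis (Triv v) else basis (Arr ys))"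

text \<open>D_w on a single path x_1...x_n: sum over i with x_i = w of
  (-1)^(lambda_i mu_i) x_(i+1)...x_n x_1...x_(i-1), where the (possibly empty) subwords
  x_(i+1)...x_n and x_1...x_(i-1) are the elements e_(t(x_i)) resp. e_(h(x_i)) when empty,
  and the product is taken in C Qbar (zero if not composable).\<close>
fun Dpath :: "('a \<Rightarrow> 'v) \<Rightarrow> ('a \<Rightarrow> 'v) \<Rightarrow> 'a darrow \<Rightarrow> ('v,'a) qpath \<Rightarrow> ('v,'a) elt" where
  "Dpath hh tt w (Triv i) = (\<lambda>q. 0)"
| "Dpath hh tt w (Arr xs) = (\<lambda>q. \<Sum>i<length xs. if xs ! i = w then
      sgnc (int (nstars (drop (Suc i) xs)) * int (nstars (take (Suc i) xs))) *
      emul hh tt (word (dt hh tt w) (drop (Suc i) xs)) (word (dh hh tt w) (take i xs)) q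
    else 0)"

definition Dw :: "('a \<Rightarrow> 'v) \<Rightarrow> ('a \<Rightarrow> 'v) \<Rightarrow> 'a darrow \<Rightarrow> ('v,'a) elt \<Rightarrow> ('v,'a) elt" where
  "Dw hh tt w f = (\<lambda>q. \<Sum>p \<in> {p. f p \<noteq> 0}. f p * Dpath hh tt w p q)"

definition schouten :: "'a set \<Rightarrow> ('a \<Rightarrow> 'v) \<Rightarrow> ('a \<Rightarrow> 'v) \<Rightarrow> int \<Rightarrow> int \<Rightarrow> ('v,'a) elt \<Rightarrow> ('v,'a) elt \<Rightarrow> ('v,'a) elt" where
  "schouten Q hh tt r s \<gamma> \<delta> = (\<lambda>q. \<Sum>a\<in>Q.
      emul hh tt (Dw hh tt (Star a) \<gamma>) (Dw hh tt (Orig a) \<delta>) q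
      - sgnc ((r - 1) * (s - 1)) * emul hh tt (Dw hh tt (Star a) \<delta>) (Dw hh tt (Orig a) \<gamma>) q)"

text \<open>Generators of the relations defining VQ: PR - (-1)^(pr) RP.\<close>
definition relgens :: "'v set \<Rightarrow> 'a set \<Rightarrow> ('a \<Rightarrow> 'v) \<Rightarrow> ('a \<Rightarrow> 'v) \<Rightarrow> ('v,'a) elt set" where
  "relgens I Q hh tt = {(\<lambda>q. emul hh tt P R q - sgnc (int p * int r) * emul hh tt R P q) | P R p r.
      P \<in> graded I Q hh tt p \<and> R \<in> graded I Q hh tt r}"

text \<open>Their complex linear span; x = y in VQ iff x - y lies in it.\<close>
inductive_set relspan :: "'v set \<Rightarrow> 'a set \<Rightarrow> ('a \<Rightarrow> 'v) \<Rightarrow> ('a \<Rightarrow> 'v) \<Rightarrow> ('v,'a) elt set"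
  for I Q hh tt where
  zero: "(\<lambda>q. 0) \<in> relspan I Q hh tt"
| gen: "x \<in> relgens I Q hh tt \<Longrightarrow> x \<in> relspan I Q hh tt"
| add: "x \<in> relspan I Q hh tt \<Longrightarrow> y \<in> relspan I Q hh tt \<Longrightarrow> (\<lambda>q. x q + y q) \<in> relspan I Q hh tt"
| scale: "x \<in> relspan I Q hh tt \<Longrightarrow> (\<lambda>q. c * x q) \<in> relspan I Q hh tt"

end

theory Submission
  imports Defs "HOL-Library.Function_Algebras"
begin

text \<open>
  Both identities are multilinear, so they are checked on paths. Antisymmetry holds already in
  the path algebra: swapping the arguments exchanges the two halves of the bracket up to the sign
  (-1)^((r-1)(s-1)).

  For the Jacobi identity, D_w vanishes on paths that are not closed, and it kills the relations
  because D_w(PR) and D_w(RP) are sums over the same cyclic word and differ by the Koszul sign.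
  Hence only closed walks matter. Modulo the relations, the bracket of two closed walks X and Y
  is a signed sum over the pairs of dual letters X_i, Y_j, each contributing the closed word
  obtained by cutting out both letters and gluing the remainders. A nested bracket [X,[Y,Z]]
  becomes a sum over two successive contractions. Those in which X is contracted with a letter
  coming from Y reappear in [Z,[X,Y]] with the two contractions performed in the other order:
  the resulting words are rotations of each other and the signs are opposite. Together with the
  cyclic permutations this cancels all terms of the Jacobiator.
\<close>

section \<open>Finitely supported elements\<close>

lemma sum_apply: "(sum f S) x = (\<Sum>i\<in>S. f i x)"
  by (induct S rule: infinite_finite_induct) auto

lemma sum_lessThan_add_split:
  "(\<Sum>i<(m::nat) + n. f i) = (\<Sum>i<m. f i) + (\<Sum>k<n. f (m + k))"
  by (induct n) (auto simp: add.assoc)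

definition supp :: "('v,'a) elt \<Rightarrow> ('v,'a) qpath set" where
  "supp f = {p. f p \<noteq> 0}"

abbreviation fin_supp :: "('v,'a) elt \<Rightarrow> bool" where
  "fin_supp f \<equiv> finite (supp f)"

definition smul :: "complex \<Rightarrow> ('v,'a) elt \<Rightarrow> ('v,'a) elt" where
  "smul c f = (\<lambda>q. c * f q)"

lemma smul_apply [simp]: "smul c f q = c * f q"
  by (simp add: smul_def)

lemma smul_add: "smul c (f + g) = smul c f + smul c g"
  by (simp add: fun_eq_iff algebra_simps)

lemma smul_diff: "smul c (f - g) = smul c f - smul c g"
  by (simp add: fun_eq_iff algebra_simps)

lemma smul_smul: "smul c (smul d f) = smul (c * d) f"
  by (simp add: fun_eq_iff)

lemma smul_sum: "smul c (sum f I) = (\<Sum>i\<in>I. smul c (f i))"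
  by (simp add: fun_eq_iff sum_apply sum_distrib_left)

lemma smul_zero [simp]: "smul c 0 = 0"
  by (simp add: fun_eq_iff)

lemma smul_one [simp]: "smul 1 f = f"
  by (simp add: fun_eq_iff)

lemma smul_minus_one: "smul (-1) f = - f"
  by (simp add: fun_eq_iff)

lemma smul_uminus: "smul (- c) f = - smul c f"
  by (simp add: fun_eq_iff)

lemma supp_add: "supp (f + g) \<subseteq> supp f \<union> supp g"
  by (auto simp: supp_def)

lemma supp_smul: "supp (smul c f) \<subseteq> supp f"
  by (auto simp: supp_def)

lemma supp_basis: "supp (basis p) = {p}"
  by (auto simp: supp_def basis_def)

lemma fin_supp_add [simp]: "fin_supp f \<Longrightarrow> fin_supp g \<Longrightarrow> fin_supp (f + g)"
  by (meson finite_UnI rev_finite_subset supp_add)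

lemma fin_supp_uminus [simp]: "fin_supp (- f) = fin_supp f"
  by (simp add: supp_def)

lemma fin_supp_diff [simp]: "fin_supp f \<Longrightarrow> fin_supp g \<Longrightarrow> fin_supp (f - g)"
  by (metis diff_conv_add_uminus fin_supp_add fin_supp_uminus)

lemma fin_supp_smul [simp]: "fin_supp f \<Longrightarrow> fin_supp (smul c f)"
  by (meson rev_finite_subset supp_smul)

lemma fin_supp_zero [simp]: "fin_supp 0"
  by (simp add: supp_def)

lemma fin_supp_sum [simp]:
  "(\<And>i. i \<in> I \<Longrightarrow> fin_supp (f i)) \<Longrightarrow> fin_supp (sum f I)"
  by (induct I rule: infinite_finite_induct) auto

lemma fin_supp_basis [simp]: "fin_supp (basis p)"
  by (simp add: supp_basis)

lemma elt_eq_sum_basis: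
  assumes "fin_supp f"
  shows "f = (\<Sum>p\<in>supp f. smul (f p) (basis p))"
proof
  fix q
  have "(\<Sum>p\<in>supp f. smul (f p) (basis p)) q = (\<Sum>p\<in>supp f. if q = p then f p else 0)"
    by (auto simp: sum_apply basis_def intro!: sum.cong)
  thus "f q = (\<Sum>p\<in>supp f. smul (f p) (basis p)) q"
    using assms by (auto simp: supp_def)
qed

lemma emul_eq_double_sum:
  assumes "finite S" "finite T" "supp f \<subseteq> S" "supp g \<subseteq> T"
  shows "emul hh tt f g p = (\<Sum>p1\<in>S. \<Sum>p2\<in>T. of_bool (pmul hh tt p1 p2 = Some p) * (f p1 * g p2))"
proof -
  let ?P = "{(p1,p2). f p1 \<noteq> 0 \<and> g p2 \<noteq> 0 \<and> pmul hh tt p1 p2 = Some p}"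
  have "?P \<subseteq> S \<times> T"
    using assms(3,4) by (auto simp: supp_def)
  hence "(\<Sum>(p1,p2)\<in>S \<times> T. of_bool (pmul hh tt p1 p2 = Some p) * (f p1 * g p2))
      = (\<Sum>(p1,p2)\<in>?P. f p1 * g p2)"
    using assms(1,2) by (intro sum.mono_neutral_cong_right) auto
  thus ?thesis
    unfolding emul_def by (simp add: sum.cartesian_product)
qed

lemma emul_basis:
  "emul hh tt (basis p) (basis q) = (case pmul hh tt p q of None \<Rightarrow> 0 | Some m \<Rightarrow> basis m)"
proof
  fix m
  have "emul hh tt (basis p) (basis q) m
      = (\<Sum>p1\<in>{p}. \<Sum>p2\<in>{q}. of_bool (pmul hh tt p1 p2 = Some m) * (basis p p1 * basis q p2))"
    by (rule emul_eq_double_sum) (simp_all add: supp_basis)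
  thus "emul hh tt (basis p) (basis q) m = (case pmul hh tt p q of None \<Rightarrow> 0 | Some m \<Rightarrow> basis m) m"
    by (simp add: basis_def split: option.splits)
qed

lemma fin_supp_emul [simp]:
  assumes "fin_supp f" "fin_supp g"
  shows "fin_supp (emul hh tt f g)"
proof -
  have "supp (emul hh tt f g) \<subseteq> (\<lambda>(p1,p2). the (pmul hh tt p1 p2)) ` (supp f \<times> supp g)"
  proof
    fix p assume "p \<in> supp (emul hh tt f g)"
    hence "{(p1,p2). f p1 \<noteq> 0 \<and> g p2 \<noteq> 0 \<and> pmul hh tt p1 p2 = Some p} \<noteq> {}"
      by (force simp: supp_def emul_def)
    thus "p \<in> (\<lambda>(p1,p2). the (pmul hh tt p1 p2)) ` (supp f \<times> supp g)"
      by (force simp: supp_def)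
  qed
  thus ?thesis
    using assms by (meson finite_SigmaI finite_imageI rev_finite_subset)
qed

lemma emul_add_left:
  assumes "fin_supp f" "fin_supp g" "fin_supp h"
  shows "emul hh tt (f + g) h = emul hh tt f h + emul hh tt g h"
proof
  fix p
  let ?S = "supp f \<union> supp g"
  show "emul hh tt (f + g) h p = (emul hh tt f h + emul hh tt g h) p"
    using emul_eq_double_sum[of ?S "supp h" "f + g" h hh tt p] emul_eq_double_sum[of ?S "supp h" f h hh tt p]
      emul_eq_double_sum[of ?S "supp h" g h hh tt p] assms supp_add[of f g]
    by (simp add: sum.distrib[symmetric] algebra_simps)
qed

lemma emul_add_right:
  assumes "fin_supp f" "fin_supp g" "fin_supp h"
  shows "emul hh tt h (f + g) = emul hh tt h f + emul hh tt h g"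
proof
  fix p
  let ?S = "supp f \<union> supp g"
  show "emul hh tt h (f + g) p = (emul hh tt h f + emul hh tt h g) p"
    using emul_eq_double_sum[of "supp h" ?S h "f + g" hh tt p] emul_eq_double_sum[of "supp h" ?S h f hh tt p]
      emul_eq_double_sum[of "supp h" ?S h g hh tt p] assms supp_add[of f g]
    by (simp add: sum.distrib[symmetric] algebra_simps)
qed

lemma emul_smul_left:
  assumes "fin_supp f" "fin_supp h"
  shows "emul hh tt (smul c f) h = smul c (emul hh tt f h)"
proof
  fix p
  show "emul hh tt (smul c f) h p = smul c (emul hh tt f h) p"
    using emul_eq_double_sum[of "supp f" "supp h" "smul c f" h hh tt p]
      emul_eq_double_sum[of "supp f" "supp h" f h hh tt p] assms supp_smul[of c f]
    by (simp add: sum_distrib_left algebra_simps)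
qed

lemma emul_smul_right:
  assumes "fin_supp f" "fin_supp h"
  shows "emul hh tt h (smul c f) = smul c (emul hh tt h f)"
proof
  fix p
  show "emul hh tt h (smul c f) p = smul c (emul hh tt h f) p"
    using emul_eq_double_sum[of "supp h" "supp f" h "smul c f" hh tt p]
      emul_eq_double_sum[of "supp h" "supp f" h f hh tt p] assms supp_smul[of c f]
    by (simp add: sum_distrib_left algebra_simps)
qed

lemma emul_zero_left [simp]: "emul hh tt 0 h = 0"
  by (simp add: emul_def fun_eq_iff)

lemma emul_zero_right [simp]: "emul hh tt h 0 = 0"
  by (simp add: emul_def fun_eq_iff)

lemma emul_sum_left:
  assumes "finite I" "\<And>i. i \<in> I \<Longrightarrow> fin_supp (f i)" "fin_supp h"
  shows "emul hh tt (\<Sum>i\<in>I. f i) h = (\<Sum>i\<in>I. emul hh tt (f i) h)"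
  using assms by (induct I rule: finite_induct) (auto simp: emul_add_left)

lemma emul_sum_right:
  assumes "finite I" "\<And>i. i \<in> I \<Longrightarrow> fin_supp (f i)" "fin_supp h"
  shows "emul hh tt h (\<Sum>i\<in>I. f i) = (\<Sum>i\<in>I. emul hh tt h (f i))"
  using assms by (induct I rule: finite_induct) (auto simp: emul_add_right)

lemma emul_expand_basis:
  assumes "fin_supp P" "fin_supp R"
  shows "emul hh tt P R
       = (\<Sum>p1\<in>supp P. \<Sum>p2\<in>supp R. smul (P p1 * R p2) (emul hh tt (basis p1) (basis p2)))"
proof -
  have "emul hh tt P R
      = emul hh tt (\<Sum>p1\<in>supp P. smul (P p1) (basis p1)) (\<Sum>p2\<in>supp R. smul (R p2) (basis p2))"
    by (simp only: elt_eq_sum_basis[OF assms(1), symmetric] elt_eq_sum_basis[OF assms(2), symmetric])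
  also have "\<dots> = (\<Sum>p1\<in>supp P. \<Sum>p2\<in>supp R.
      emul hh tt (smul (P p1) (basis p1)) (smul (R p2) (basis p2)))"
    using assms by (subst emul_sum_left) (auto intro!: sum.cong simp: emul_sum_right)
  finally show ?thesis
    by (simp add: emul_smul_left emul_smul_right smul_smul mult.commute)
qed

lemma Dw_eq_sum:
  assumes "finite S" "supp f \<subseteq> S"
  shows "Dw hh tt w f q = (\<Sum>p\<in>S. f p * Dpath hh tt w p q)"
  unfolding Dw_def by (rule sum.mono_neutral_left) (use assms in \<open>auto simp: supp_def\<close>)

lemma Dw_basis: "Dw hh tt w (basis p) = Dpath hh tt w p"
proof
  fix q
  have "Dw hh tt w (basis p) q = (\<Sum>p'\<in>{p}. basis p p' * Dpath hh tt w p' q)"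
    by (rule Dw_eq_sum) (simp_all add: supp_basis)
  thus "Dw hh tt w (basis p) q = Dpath hh tt w p q"
    by (simp add: basis_def)
qed

lemma fin_supp_Dpath [simp]: "fin_supp (Dpath hh tt w p)"
proof (cases p)
  case (Arr xs)
  let ?c = "\<lambda>i. if xs ! i = w
    then sgnc (int (nstars (drop (Suc i) xs)) * int (nstars (take (Suc i) xs))) else 0"
  let ?g = "\<lambda>i. smul (?c i) (emul hh tt (word (dt hh tt w) (drop (Suc i) xs)) (word (dh hh tt w) (take i xs)))"
  have "Dpath hh tt w p = (\<Sum>i<length xs. ?g i)"
    using Arr by (auto simp: sum_apply fun_eq_iff intro!: sum.cong)
  moreover have "fin_supp (\<Sum>i<length xs. ?g i)"
    by (intro fin_supp_sum fin_supp_smul fin_supp_emul) (auto simp: word_def)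
  ultimately show ?thesis by simp
qed (simp add: supp_def)

lemma fin_supp_Dw [simp]:
  assumes "fin_supp f"
  shows "fin_supp (Dw hh tt w f)"
proof -
  have "Dw hh tt w f = (\<Sum>p\<in>supp f. smul (f p) (Dpath hh tt w p))"
    by (auto simp: sum_apply fun_eq_iff Dw_def supp_def)
  thus ?thesis using assms by simp
qed

lemma Dw_add:
  assumes "fin_supp f" "fin_supp g"
  shows "Dw hh tt w (f + g) = Dw hh tt w f + Dw hh tt w g"
proof
  fix q
  show "Dw hh tt w (f + g) q = (Dw hh tt w f + Dw hh tt w g) q"
    using Dw_eq_sum[of "supp f \<union> supp g" "f + g" hh tt w q] Dw_eq_sum[of "supp f \<union> supp g" f hh tt w q]
      Dw_eq_sum[of "supp f \<union> supp g" g hh tt w q] assms supp_add[of f g]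
    by (auto simp: sum.distrib[symmetric] distrib_right)
qed

lemma Dw_smul:
  assumes "fin_supp f"
  shows "Dw hh tt w (smul c f) = smul c (Dw hh tt w f)"
proof
  fix q
  show "Dw hh tt w (smul c f) q = smul c (Dw hh tt w f) q"
    using Dw_eq_sum[of "supp f" "smul c f" hh tt w q] Dw_eq_sum[of "supp f" f hh tt w q] assms
      supp_smul[of c f]
    by (auto simp: sum_distrib_left mult.assoc)
qed

lemma Dw_diff:
  assumes "fin_supp f" "fin_supp g"
  shows "Dw hh tt w (f - g) = Dw hh tt w f - Dw hh tt w g"
  using assms Dw_add[of f "- g"] Dw_smul[of g hh tt w "-1"] by (simp add: smul_minus_one)

lemma Dw_zero [simp]: "Dw hh tt w 0 = 0"
  by (simp add: Dw_def fun_eq_iff)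

lemma Dw_sum:
  assumes "finite I" "\<And>i. i \<in> I \<Longrightarrow> fin_supp (f i)"
  shows "Dw hh tt w (\<Sum>i\<in>I. f i) = (\<Sum>i\<in>I. Dw hh tt w (f i))"
  using assms by (induct I rule: finite_induct) (auto simp: Dw_add)

lemma sgnc_0 [simp]: "sgnc 0 = 1"
  by (simp add: sgnc_def)

lemma sgnc_add: "sgnc (a + b) = sgnc a * sgnc b"
  by (auto simp: sgnc_def)

lemma sgnc_eq_iff: "sgnc a = sgnc b \<longleftrightarrow> (even a \<longleftrightarrow> even b)"
  by (auto simp: sgnc_def)

lemma sgnc_mult_self [simp]: "sgnc e * (sgnc e * z) = z"
  by (simp add: sgnc_def)

lemma schouten_eq_sum:
  "schouten Q hh tt r s g d =
   (\<Sum>a\<in>Q. emul hh tt (Dw hh tt (Star a) g) (Dw hh tt (Orig a) d)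
      - smul (sgnc ((r - 1) * (s - 1))) (emul hh tt (Dw hh tt (Star a) d) (Dw hh tt (Orig a) g)))"
  by (rule ext) (simp add: schouten_def sum_apply)

lemma fin_supp_schouten [simp]:
  "fin_supp g \<Longrightarrow> fin_supp d \<Longrightarrow> fin_supp (schouten Q hh tt r s g d)"
  by (simp add: schouten_eq_sum)

lemma schouten_antisym:
  "schouten Q hh tt r s A B = - smul (sgnc ((r - 1) * (s - 1))) (schouten Q hh tt s r B A)"
proof
  fix q
  let ?e = "sgnc ((r - 1) * (s - 1))"
  let ?x = "\<Sum>a\<in>Q. emul hh tt (Dw hh tt (Star a) A) (Dw hh tt (Orig a) B) q"
  let ?y = "\<Sum>a\<in>Q. emul hh tt (Dw hh tt (Star a) B) (Dw hh tt (Orig a) A) q"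
  have e: "sgnc ((s - 1) * (r - 1)) = ?e"
    by (simp add: mult.commute)
  have "schouten Q hh tt r s A B q = ?x - ?e * ?y" "schouten Q hh tt s r B A q = ?y - ?e * ?x"
    by (simp_all add: schouten_def e sum_subtractf sum_distrib_left)
  thus "schouten Q hh tt r s A B q = (- smul ?e (schouten Q hh tt s r B A)) q"
    by (simp add: right_diff_distrib)
qed

section \<open>Derivations of cyclic words\<close>

definition closed_word :: "('a \<Rightarrow> 'v) \<Rightarrow> ('a \<Rightarrow> 'v) \<Rightarrow> 'a darrow list \<Rightarrow> bool" where
  "closed_word hh tt zs \<longleftrightarrow> zs \<noteq> [] \<and> dt hh tt (last zs) = dh hh tt (hd zs)"

definition cyclic_cut :: "'a darrow list \<Rightarrow> nat \<Rightarrow> 'a darrow list" where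
  "cyclic_cut zs i = drop (Suc i) zs @ take i zs"

lemma length_cyclic_cut: "j < length Y \<Longrightarrow> length (cyclic_cut Y j) = length Y - 1"
  by (simp add: cyclic_cut_def)

definition cyclic_cut_sign :: "'a darrow list \<Rightarrow> nat \<Rightarrow> complex" where
  "cyclic_cut_sign zs i = sgnc (int (nstars (drop (Suc i) zs)) * int (nstars (take (Suc i) zs)))"

definition word_path :: "'v \<Rightarrow> 'a darrow list \<Rightarrow> ('v,'a) qpath" where
  "word_path v ys = (if ys = [] then Triv v else Arr ys)"

lemma nstars_Nil [simp]: "nstars [] = 0"
  by (simp add: nstars_def)

lemma nstars_append [simp]: "nstars (xs @ ys) = nstars xs + nstars ys"
  by (simp add: nstars_def)

lemma nstars_Cons [simp]: "nstars (x # xs) = of_bool (is_star x) + nstars xs"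
  by (simp add: nstars_def)

lemma emul_words_cut:
  assumes "i < length zs" "zs ! i = w"
  shows "emul hh tt (word (dt hh tt w) (drop (Suc i) zs)) (word (dh hh tt w) (take i zs))
       = (if closed_word hh tt zs then basis (word_path (dt hh tt w) (cyclic_cut zs i)) else 0)"
proof -
  have "zs \<noteq> []"
    using assms by auto
  hence hd: "hd zs = zs ! 0" and last: "last zs = zs ! (length zs - 1)"
    by (simp_all add: hd_conv_nth last_conv_nth)
  have hd_take: "hd (take i zs) = zs ! 0" if "i \<noteq> 0"
    using that hd by (simp add: hd_take)
  show ?thesis
  proof (cases "Suc i = length zs")
    case True
    hence "last zs = zs ! i"
      using last by (metis diff_Suc_1)
    thus ?thesis
      using True assms hd_take
      by (cases "i = 0") (auto simp: word_def emul_basis closed_word_def cyclic_cut_def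
        word_path_def hd)
  next
    case False
    hence "drop (Suc i) zs \<noteq> []" "last (drop (Suc i) zs) = last zs"
      using assms by auto
    thus ?thesis
      using assms hd_take
      by (cases "i = 0") (auto simp: word_def emul_basis closed_word_def cyclic_cut_def
        word_path_def hd)
  qed
qed

lemma Dpath_Arr_eq:
  "Dpath hh tt w (Arr zs) = (if closed_word hh tt zs
     then (\<Sum>i<length zs. if zs ! i = w
       then smul (cyclic_cut_sign zs i) (basis (word_path (dt hh tt w) (cyclic_cut zs i))) else 0)
     else 0)"
  by (rule ext) (auto simp: sum_apply emul_words_cut cyclic_cut_sign_def intro!: sum.cong
    sum.neutral)

declare Dpath.simps(2) [simp del]

lemma Dpath_not_closed: "\<not> closed_word hh tt zs \<Longrightarrow> Dpath hh tt w (Arr zs) = 0"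
  by (simp add: Dpath_Arr_eq)

lemma cyclic_cut_sign_append_left:
  assumes "i < length xs"
  shows "cyclic_cut_sign (xs @ ys) i
       = sgnc (int (nstars xs) * int (nstars ys)) * cyclic_cut_sign (ys @ xs) (length ys + i)"
proof -
  have "nstars xs = nstars (take (Suc i) xs) + nstars (drop (Suc i) xs)"
    by (metis append_take_drop_id nstars_append)
  thus ?thesis
    using assms
    by (simp add: cyclic_cut_sign_def sgnc_add[symmetric] sgnc_eq_iff algebra_simps even_add
      even_mult_iff)
qed

lemma cyclic_cut_sign_append_right:
  assumes "k < length ys"
  shows "cyclic_cut_sign (xs @ ys) (length xs + k)
       = sgnc (int (nstars xs) * int (nstars ys)) * cyclic_cut_sign (ys @ xs) k"
proof -
  have "nstars ys = nstars (take (Suc k) ys) + nstars (drop (Suc k) ys)"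
    by (metis append_take_drop_id nstars_append)
  thus ?thesis
    using assms
    by (simp add: cyclic_cut_sign_def sgnc_add[symmetric] sgnc_eq_iff algebra_simps even_add
      even_mult_iff)
qed

lemma Dpath_rotate:
  assumes "closed_word hh tt (xs @ ys) \<longleftrightarrow> closed_word hh tt (ys @ xs)"
  shows "Dpath hh tt w (Arr (xs @ ys))
       = smul (sgnc (int (nstars xs) * int (nstars ys))) (Dpath hh tt w (Arr (ys @ xs)))"
proof (cases "closed_word hh tt (xs @ ys)")
  case True
  let ?s = "sgnc (int (nstars xs) * int (nstars ys))"
  let ?F = "\<lambda>zs i. if zs ! i = w
    then smul (cyclic_cut_sign zs i) (basis (word_path (dt hh tt w) (cyclic_cut zs i))) else 0"
  let ?m = "length xs" and ?n = "length ys"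
  have "Dpath hh tt w (Arr (xs @ ys)) = (\<Sum>i<?m. ?F (xs @ ys) i) + (\<Sum>k<?n. ?F (xs @ ys) (?m + k))"
    using True by (simp add: Dpath_Arr_eq sum_lessThan_add_split)
  also have "(\<Sum>i<?m. ?F (xs @ ys) i) = (\<Sum>i<?m. smul ?s (?F (ys @ xs) (?n + i)))"
    by (rule sum.cong) (auto simp: cyclic_cut_sign_append_left cyclic_cut_def nth_append smul_smul)
  also have "(\<Sum>k<?n. ?F (xs @ ys) (?m + k)) = (\<Sum>k<?n. smul ?s (?F (ys @ xs) k))"
    by (rule sum.cong) (auto simp: cyclic_cut_sign_append_right cyclic_cut_def nth_append smul_smul)
  also have "(\<Sum>i<?m. smul ?s (?F (ys @ xs) (?n + i))) + (\<Sum>k<?n. smul ?s (?F (ys @ xs) k))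
      = smul ?s ((\<Sum>k<?n. ?F (ys @ xs) k) + (\<Sum>i<?m. ?F (ys @ xs) (?n + i)))"
    by (simp add: smul_add smul_sum add.commute)
  also have "\<dots> = smul ?s (Dpath hh tt w (Arr (ys @ xs)))"
    using True assms by (simp add: Dpath_Arr_eq sum_lessThan_add_split)
  finally show ?thesis .
qed (use assms in \<open>simp add: Dpath_not_closed\<close>)

fun pword :: "('v,'a) qpath \<Rightarrow> 'a darrow list" where
  "pword (Triv i) = []"
| "pword (Arr xs) = xs"

fun psrc :: "('a \<Rightarrow> 'v) \<Rightarrow> ('a \<Rightarrow> 'v) \<Rightarrow> ('v,'a) qpath \<Rightarrow> 'v" where
  "psrc hh tt (Triv i) = i"
| "psrc hh tt (Arr xs) = dh hh tt (hd xs)"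

fun ptgt :: "('a \<Rightarrow> 'v) \<Rightarrow> ('a \<Rightarrow> 'v) \<Rightarrow> ('v,'a) qpath \<Rightarrow> 'v" where
  "ptgt hh tt (Triv i) = i"
| "ptgt hh tt (Arr xs) = dt hh tt (last xs)"

lemma path_stars_eq: "path_stars p = nstars (pword p)"
  by (cases p) auto

lemma Dw_emul_basis_eq_case:
  "Dw hh tt w (emul hh tt (basis p1) (basis p2))
     = (case pmul hh tt p1 p2 of None \<Rightarrow> 0 | Some m \<Rightarrow> Dpath hh tt w m)"
  by (simp add: emul_basis Dw_basis split: option.split)

lemma Dw_emul_basis:
  assumes "p1 \<noteq> Arr []" "p2 \<noteq> Arr []"
  shows "Dw hh tt w (emul hh tt (basis p1) (basis p2))
       = (if ptgt hh tt p1 = psrc hh tt p2 \<and> ptgt hh tt p2 = psrc hh tt p1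
          then Dpath hh tt w (Arr (pword p1 @ pword p2)) else 0)"
proof (cases p1; cases p2)
  fix i j
  assume "p1 = Triv i" "p2 = Triv j"
  thus ?thesis
    by (cases "i = j") (simp_all add: Dw_emul_basis_eq_case Dpath_Arr_eq closed_word_def zero_fun_def)
qed (use assms in \<open>auto simp: Dw_emul_basis_eq_case Dpath_not_closed closed_word_def\<close>)

lemma Dw_emul_basis_commute:
  assumes "p1 \<noteq> Arr []" "p2 \<noteq> Arr []"
  shows "Dw hh tt w (emul hh tt (basis p1) (basis p2))
       = smul (sgnc (int (path_stars p1) * int (path_stars p2)))
         (Dw hh tt w (emul hh tt (basis p2) (basis p1)))"
proof -
  have "closed_word hh tt (pword p1 @ pword p2) \<longleftrightarrow> closed_word hh tt (pword p2 @ pword p1)"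
    if "ptgt hh tt p1 = psrc hh tt p2" "ptgt hh tt p2 = psrc hh tt p1"
    using that assms by (cases p1; cases p2) (auto simp: closed_word_def)
  thus ?thesis
    unfolding Dw_emul_basis[OF assms] Dw_emul_basis[OF assms(2,1)] path_stars_eq
    by (auto intro: Dpath_rotate)
qed

section \<open>The relations\<close>

lemma graded_fin_supp: "P \<in> graded I Q hh tt p \<Longrightarrow> fin_supp P"
  by (simp add: graded_def in_CQ_def supp_def)

lemma graded_supp:
  "P \<in> graded I Q hh tt p \<Longrightarrow> x \<in> supp P \<Longrightarrow> path_stars x = p \<and> valid_path I Q hh tt x"
  by (simp add: graded_def in_CQ_def supp_def)

lemma Dw_relgen_eq_zero:
  assumes "P \<in> graded I Q hh tt p" "R \<in> graded I Q hh tt r"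
  shows "Dw hh tt w (emul hh tt P R - smul (sgnc (int p * int r)) (emul hh tt R P)) = 0"
proof -
  have fP: "fin_supp P" and fR: "fin_supp R"
    using assms by (auto intro: graded_fin_supp)
  let ?s = "sgnc (int p * int r)"
  let ?D = "\<lambda>p1 p2. Dw hh tt w (emul hh tt (basis p1) (basis p2))"
  have "Dw hh tt w (emul hh tt P R) = (\<Sum>p1\<in>supp P. \<Sum>p2\<in>supp R. smul (P p1 * R p2) (?D p1 p2))"
    using fP fR by (simp add: emul_expand_basis[OF fP fR] Dw_sum Dw_smul)
  also have "\<dots> = (\<Sum>p1\<in>supp P. \<Sum>p2\<in>supp R. smul ?s (smul (R p2 * P p1) (?D p2 p1)))"
  proof (intro sum.cong refl)
    fix p1 p2
    assume "p1 \<in> supp P" "p2 \<in> supp R"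
    hence "path_stars p1 = p \<and> valid_path I Q hh tt p1" "path_stars p2 = r \<and> valid_path I Q hh tt p2"
      using graded_supp assms by blast+
    hence nonempty: "p1 \<noteq> Arr []" "p2 \<noteq> Arr []" and stars: "path_stars p1 = p" "path_stars p2 = r"
      by auto
    thus "smul (P p1 * R p2) (?D p1 p2) = smul ?s (smul (R p2 * P p1) (?D p2 p1))"
      unfolding Dw_emul_basis_commute[OF nonempty] stars by (simp add: smul_smul mult.commute)
  qed
  also have "\<dots> = smul ?s (\<Sum>p2\<in>supp R. \<Sum>p1\<in>supp P. smul (R p2 * P p1) (?D p2 p1))"
    by (simp add: smul_sum sum.swap[of _ "supp P"])
  also have "\<dots> = smul ?s (Dw hh tt w (emul hh tt R P))"
    using fP fR by (simp add: emul_expand_basis[OF fR fP] Dw_sum Dw_smul)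
  finally show ?thesis
    using fP fR by (simp add: Dw_diff Dw_smul)
qed

lemma relspan_Dw_eq_zero: "x \<in> relspan I Q hh tt \<Longrightarrow> fin_supp x \<and> (\<forall>w. Dw hh tt w x = 0)"
proof (induct rule: relspan.induct)
  case zero
  show ?case by (simp add: supp_def Dw_def)
next
  case (gen x)
  then obtain P R p r where "x = (\<lambda>q. emul hh tt P R q - sgnc (int p * int r) * emul hh tt R P q)"
    and g: "P \<in> graded I Q hh tt p" "R \<in> graded I Q hh tt r"
    unfolding relgens_def by auto
  hence x: "x = emul hh tt P R - smul (sgnc (int p * int r)) (emul hh tt R P)"
    by (simp add: fun_eq_iff)
  have "fin_supp x"
    unfolding x using g by (intro fin_supp_diff fin_supp_smul fin_supp_emul graded_fin_supp)
  moreover have "Dw hh tt w x = 0" for w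
    unfolding x by (rule Dw_relgen_eq_zero[OF g])
  ultimately show ?case
    by blast
next
  case (add x y)
  have "(\<lambda>q. x q + y q) = x + y"
    by (simp add: fun_eq_iff)
  thus ?case using add by (simp add: Dw_add)
next
  case (scale x c)
  have "(\<lambda>q. c * x q) = smul c x"
    by (simp add: fun_eq_iff)
  thus ?case using scale by (simp add: Dw_smul)
qed

lemma relspan_zero [simp]: "0 \<in> relspan I Q hh tt"
  unfolding zero_fun_def by (rule relspan.zero)

lemma relspan_add:
  "x \<in> relspan I Q hh tt \<Longrightarrow> y \<in> relspan I Q hh tt \<Longrightarrow> x + y \<in> relspan I Q hh tt"
  using relspan.add[of x I Q hh tt y] by (simp add: plus_fun_def)

lemma relspan_smul: "x \<in> relspan I Q hh tt \<Longrightarrow> smul c x \<in> relspan I Q hh tt"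
  using relspan.scale[of x I Q hh tt c] by (simp add: smul_def)

lemma relspan_uminus: "x \<in> relspan I Q hh tt \<Longrightarrow> - x \<in> relspan I Q hh tt"
  using relspan_smul[of x I Q hh tt "-1"] by (simp add: smul_minus_one)

lemma relspan_sum:
  "(\<And>i. i \<in> S \<Longrightarrow> f i \<in> relspan I Q hh tt) \<Longrightarrow> sum f S \<in> relspan I Q hh tt"
  by (induct S rule: infinite_finite_induct) (auto intro: relspan_add)

lemma relgen_in_relspan:
  assumes "P \<in> graded I Q hh tt p" "R \<in> graded I Q hh tt r"
  shows "emul hh tt P R - smul (sgnc (int p * int r)) (emul hh tt R P) \<in> relspan I Q hh tt"
proof -
  have "emul hh tt P R - smul (sgnc (int p * int r)) (emul hh tt R P) \<in> relgens I Q hh tt"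
    unfolding relgens_def fun_diff_def smul_def using assms by blast
  thus ?thesis by (rule relspan.gen)
qed

lemma schouten_Dw_zero_left: "(\<And>w. Dw hh tt w f = 0) \<Longrightarrow> schouten Q hh tt r s f g = 0"
  by (simp add: schouten_eq_sum)

lemma schouten_Dw_zero_right: "(\<And>w. Dw hh tt w f = 0) \<Longrightarrow> schouten Q hh tt r s g f = 0"
  by (simp add: schouten_eq_sum)

lemma schouten_relspan_right: "x \<in> relspan I Q hh tt \<Longrightarrow> schouten Q hh tt r s g x = 0"
  by (simp add: relspan_Dw_eq_zero schouten_Dw_zero_right)

lemma schouten_add_left:
  assumes "fin_supp f" "fin_supp g" "fin_supp h"
  shows "schouten Q hh tt r s (f + g) h = schouten Q hh tt r s f h + schouten Q hh tt r s g h"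
  using assms
  by (simp add: schouten_eq_sum Dw_add emul_add_left emul_add_right smul_add sum.distrib[symmetric]
    algebra_simps)

lemma schouten_add_right:
  assumes "fin_supp f" "fin_supp g" "fin_supp h"
  shows "schouten Q hh tt r s h (f + g) = schouten Q hh tt r s h f + schouten Q hh tt r s h g"
  using assms
  by (simp add: schouten_eq_sum Dw_add emul_add_left emul_add_right smul_add sum.distrib[symmetric]
    algebra_simps)

lemma schouten_smul_left:
  assumes "fin_supp f" "fin_supp h"
  shows "schouten Q hh tt r s (smul c f) h = smul c (schouten Q hh tt r s f h)"
  using assms
  by (simp add: schouten_eq_sum Dw_smul emul_smul_left emul_smul_right smul_diff smul_sum smul_smul mult.commute)

lemma schouten_smul_right:
  assumes "fin_supp f" "fin_supp h"
  shows "schouten Q hh tt r s h (smul c f) = smul c (schouten Q hh tt r s h f)"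
  using assms
  by (simp add: schouten_eq_sum Dw_smul emul_smul_left emul_smul_right smul_diff smul_sum smul_smul mult.commute)

lemma schouten_zero_left [simp]: "schouten Q hh tt r s 0 h = 0"
  by (simp add: schouten_eq_sum)

lemma schouten_zero_right [simp]: "schouten Q hh tt r s h 0 = 0"
  by (simp add: schouten_eq_sum)

lemma schouten_sum_left:
  assumes "finite S" "\<And>i. i \<in> S \<Longrightarrow> fin_supp (f i)" "fin_supp h"
  shows "schouten Q hh tt r s (\<Sum>i\<in>S. f i) h = (\<Sum>i\<in>S. schouten Q hh tt r s (f i) h)"
  using assms by (induct S rule: finite_induct) (auto simp: schouten_add_left)

lemma schouten_sum_right:
  assumes "finite S" "\<And>i. i \<in> S \<Longrightarrow> fin_supp (f i)" "fin_supp h"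
  shows "schouten Q hh tt r s h (\<Sum>i\<in>S. f i) = (\<Sum>i\<in>S. schouten Q hh tt r s h (f i))"
  using assms by (induct S rule: finite_induct) (auto simp: schouten_add_right)

section \<open>Closed walks\<close>

fun walk :: "('a \<Rightarrow> 'v) \<Rightarrow> ('a \<Rightarrow> 'v) \<Rightarrow> 'v \<Rightarrow> 'v \<Rightarrow> 'a darrow list \<Rightarrow> bool" where
  "walk hh tt u v [] = (u = v)"
| "walk hh tt u v (x # xs) = (dh hh tt x = u \<and> walk hh tt (dt hh tt x) v xs)"

definition arrows_in :: "'a set \<Rightarrow> 'a darrow list \<Rightarrow> bool" where
  "arrows_in Q xs \<longleftrightarrow> (\<forall>x\<in>set xs. base_arrow x \<in> Q)"

lemma walk_append: "walk hh tt u w (xs @ ys) \<longleftrightarrow> (\<exists>m. walk hh tt u m xs \<and> walk hh tt m w ys)"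
  by (induct xs arbitrary: u) auto

lemma walk_appendI:
  "walk hh tt u m xs \<Longrightarrow> walk hh tt m w ys \<Longrightarrow> walk hh tt u w (xs @ ys)"
  by (auto simp: walk_append)

lemma walk_ends:
  "walk hh tt u v xs \<Longrightarrow> xs \<noteq> [] \<Longrightarrow> dh hh tt (hd xs) = u \<and> dt hh tt (last xs) = v"
  by (induct xs arbitrary: u) (auto elim: walk.elims)

lemma walk_iff_chain:
  assumes "xs \<noteq> []"
  shows "walk hh tt (dh hh tt (hd xs)) (dt hh tt (last xs)) xs
     \<longleftrightarrow> (\<forall>k. Suc k < length xs \<longrightarrow> dt hh tt (xs ! k) = dh hh tt (xs ! Suc k))"
  using assms
proof (induct xs)
  case (Cons x xs)
  thus ?case
    by (cases xs) (auto simp: nth_Cons split: nat.split)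
qed simp

lemma walk_closed_word: "walk hh tt u u xs \<Longrightarrow> xs \<noteq> [] \<Longrightarrow> closed_word hh tt xs"
  using walk_ends[of hh tt u u xs] by (simp add: closed_word_def)

lemma walk_cyclic_cut:
  assumes "walk hh tt u u X" "i < length X"
  shows "walk hh tt (dt hh tt (X ! i)) (dh hh tt (X ! i)) (cyclic_cut X i)"
proof -
  have "X = take i X @ (X ! i) # drop (Suc i) X"
    using assms(2) by (simp add: id_take_nth_drop)
  with assms(1) obtain m where "walk hh tt u m (take i X)" "walk hh tt m u ((X ! i) # drop (Suc i) X)"
    by (metis walk_append)
  thus ?thesis
    unfolding cyclic_cut_def walk_append by auto
qed

lemma arrows_in_append [simp]: "arrows_in Q (xs @ ys) \<longleftrightarrow> arrows_in Q xs \<and> arrows_in Q ys"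
  by (auto simp: arrows_in_def)

lemma arrows_in_cyclic_cut: "arrows_in Q X \<Longrightarrow> arrows_in Q (cyclic_cut X i)"
  by (auto simp: arrows_in_def cyclic_cut_def dest: in_set_dropD in_set_takeD)

lemma walk_valid_path:
  "walk hh tt u v xs \<Longrightarrow> xs \<noteq> [] \<Longrightarrow> arrows_in Q xs \<Longrightarrow> valid_path I Q hh tt (Arr xs)"
  using walk_ends[of hh tt u v xs] walk_iff_chain[of xs hh tt] by (auto simp: arrows_in_def)

lemma smul_basis_graded:
  "valid_path I Q hh tt p \<Longrightarrow> smul c (basis p) \<in> graded I Q hh tt (path_stars p)"
  by (auto simp: graded_def in_CQ_def basis_def intro: rev_finite_subset[of "{p}"])

lemma emul_basis_walks:
  assumes "walk hh tt a b u" "walk hh tt b a v"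
  shows "emul hh tt (basis (word_path a u)) (basis (word_path b v)) = basis (word_path a (u @ v))"
  using assms walk_ends[OF assms(1)] walk_ends[OF assms(2)]
  by (cases "u = []"; cases "v = []") (simp_all add: word_path_def emul_basis)

text \<open>The relations say precisely that a closed word may be rotated at the cost of the Koszul sign.\<close>

lemma rotation_congr:
  assumes w1: "walk hh tt a a (P @ R)" and w2: "walk hh tt b b (R @ P)"
    and ar: "arrows_in Q (P @ R)" and ab: "P @ R = [] \<Longrightarrow> a = b"
  shows "smul c (basis (word_path a (P @ R)))
         - smul (c * sgnc (int (nstars P) * int (nstars R))) (basis (word_path b (R @ P)))
       \<in> relspan I Q hh tt"
proof (cases "P = [] \<or> R = []")
  case True
  thus ?thesis
    using ab by (auto simp: word_path_def)
next
  case False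
  hence nP: "P \<noteq> []" and nR: "R \<noteq> []" by auto
  from w1 obtain m where m: "walk hh tt a m P" "walk hh tt m a R"
    by (auto simp: walk_append)
  from w2 obtain m' where m': "walk hh tt b m' R" "walk hh tt m' b P"
    by (auto simp: walk_append)
  have "smul c (basis (Arr P)) \<in> graded I Q hh tt (nstars P)"
    using smul_basis_graded[OF walk_valid_path[OF m(1) nP]] ar by simp
  moreover have "basis (Arr R) \<in> graded I Q hh tt (nstars R)"
    using smul_basis_graded[OF walk_valid_path[OF m(2) nR], where c = 1] ar by simp
  ultimately have "emul hh tt (smul c (basis (Arr P))) (basis (Arr R))
      - smul (sgnc (int (nstars P) * int (nstars R))) (emul hh tt (basis (Arr R)) (smul c (basis (Arr P))))
      \<in> relspan I Q hh tt"
    by (rule relgen_in_relspan)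
  moreover have "emul hh tt (basis (Arr P)) (basis (Arr R)) = basis (Arr (P @ R))"
    "emul hh tt (basis (Arr R)) (basis (Arr P)) = basis (Arr (R @ P))"
    using emul_basis_walks[OF m] emul_basis_walks[OF m'] nP nR by (simp_all add: word_path_def)
  ultimately show ?thesis
    using nP nR by (simp add: emul_smul_left emul_smul_right smul_smul word_path_def mult.commute)
qed

fun dual :: "'a darrow \<Rightarrow> 'a darrow" where
  "dual (Orig a) = Star a"
| "dual (Star a) = Orig a"

lemma dual_dual [simp]: "dual (dual x) = x"
  by (cases x) auto

lemma dt_dual [simp]: "dt hh tt (dual x) = dh hh tt x"
  by (cases x) auto

lemma dh_dual [simp]: "dh hh tt (dual x) = dt hh tt x"
  by (cases x) auto

lemma is_star_dual [simp]: "is_star (dual x) = (\<not> is_star x)"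
  by (cases x) auto

lemma eq_dual_iff: "(x = dual y) = (y = dual x)"
  by (cases x; cases y) auto

lemma Dw_basis_closed_walk:
  assumes "walk hh tt v v X"
  shows "Dw hh tt w (basis (word_path v X))
       = (\<Sum>i<length X. if X ! i = w
            then smul (cyclic_cut_sign X i) (basis (word_path (dt hh tt w) (cyclic_cut X i)))
            else 0)"
proof (cases "X = []")
  case False
  thus ?thesis
    using walk_closed_word[OF assms] by (simp add: Dw_basis word_path_def Dpath_Arr_eq)
qed (simp add: Dw_basis word_path_def zero_fun_def)

section \<open>The bracket of two closed walks\<close>

definition star_contractions ::
  "('a \<Rightarrow> 'v) \<Rightarrow> ('a \<Rightarrow> 'v) \<Rightarrow> 'a darrow list \<Rightarrow> 'a darrow list \<Rightarrow> ('v,'a) elt" where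
  "star_contractions hh tt X Y = (\<Sum>i<length X. \<Sum>j<length Y.
     if is_star (X ! i) \<and> Y ! j = dual (X ! i)
     then smul (cyclic_cut_sign X i * cyclic_cut_sign Y j)
            (basis (word_path (dt hh tt (X ! i)) (cyclic_cut X i @ cyclic_cut Y j)))
     else 0)"

lemma emul_Dw_basis_closed_walks:
  assumes "walk hh tt v v X" "walk hh tt u u Y"
  shows "emul hh tt (Dw hh tt (Star a) (basis (word_path v X))) (Dw hh tt (Orig a) (basis (word_path u Y)))
       = (\<Sum>i<length X. \<Sum>j<length Y. if X ! i = Star a \<and> Y ! j = Orig a
           then smul (cyclic_cut_sign X i * cyclic_cut_sign Y j)
                  (basis (word_path (dt hh tt (X ! i)) (cyclic_cut X i @ cyclic_cut Y j)))
           else 0)"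
proof -
  let ?DX = "\<lambda>i. if X ! i = Star a
    then smul (cyclic_cut_sign X i) (basis (word_path (hh a) (cyclic_cut X i))) else 0"
  let ?DY = "\<lambda>j. if Y ! j = Orig a
    then smul (cyclic_cut_sign Y j) (basis (word_path (tt a) (cyclic_cut Y j))) else 0"
  have "emul hh tt (Dw hh tt (Star a) (basis (word_path v X))) (Dw hh tt (Orig a) (basis (word_path u Y)))
      = (\<Sum>i<length X. \<Sum>j<length Y. emul hh tt (?DX i) (?DY j))"
    unfolding Dw_basis_closed_walk[OF assms(1)] Dw_basis_closed_walk[OF assms(2)]
    by (subst emul_sum_left) (auto intro!: sum.cong simp: emul_sum_right)
  also have "\<dots> = (\<Sum>i<length X. \<Sum>j<length Y. if X ! i = Star a \<and> Y ! j = Orig a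
           then smul (cyclic_cut_sign X i * cyclic_cut_sign Y j)
                  (basis (word_path (dt hh tt (X ! i)) (cyclic_cut X i @ cyclic_cut Y j)))
           else 0)"
  proof (intro sum.cong refl)
    fix i j
    assume ij: "i \<in> {..<length X}" "j \<in> {..<length Y}"
    show "emul hh tt (?DX i) (?DY j) = (if X ! i = Star a \<and> Y ! j = Orig a
           then smul (cyclic_cut_sign X i * cyclic_cut_sign Y j)
                  (basis (word_path (dt hh tt (X ! i)) (cyclic_cut X i @ cyclic_cut Y j)))
           else 0)"
    proof (cases "X ! i = Star a \<and> Y ! j = Orig a")
      case True
      hence "walk hh tt (hh a) (tt a) (cyclic_cut X i)" "walk hh tt (tt a) (hh a) (cyclic_cut Y j)"
        using ij walk_cyclic_cut[OF assms(1), of i] walk_cyclic_cut[OF assms(2), of j] by simp_all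
      thus ?thesis
        using True
        by (simp add: emul_smul_left emul_smul_right emul_basis_walks smul_smul mult.commute)
    qed auto
  qed
  finally show ?thesis .
qed

lemma sum_if_Star_Orig:
  assumes "finite Q" "base_arrow x \<in> Q"
  shows "(\<Sum>a\<in>Q. if x = Star a \<and> y = Orig a then c else 0) =
    (if is_star x \<and> y = dual x then c else 0)"
proof (cases x)
  case (Star b)
  hence "(\<Sum>a\<in>Q. if x = Star a \<and> y = Orig a then c else 0)
      = (\<Sum>a\<in>Q. if b = a then (if y = Orig b then c else 0) else 0)"
    by (intro sum.cong) auto
  thus ?thesis
    using Star assms by simp
qed simp

lemma sum_emul_Dw_basis_closed_walks:
  assumes "walk hh tt v v X" "walk hh tt u u Y" "arrows_in Q X" "finite Q"
  shows "(\<Sum>a\<in>Q. emul hh tt (Dw hh tt (Star a) (basis (word_path v X)))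
                           (Dw hh tt (Orig a) (basis (word_path u Y))))
       = star_contractions hh tt X Y"
  unfolding emul_Dw_basis_closed_walks[OF assms(1,2)] star_contractions_def
  by (subst sum.swap, intro sum.cong refl, subst sum.swap)
     (use assms(3,4) in \<open>auto simp: arrows_in_def sum_if_Star_Orig\<close>)

lemma schouten_closed_walks:
  assumes "walk hh tt v v X" "walk hh tt u u Y" "arrows_in Q X" "arrows_in Q Y" "finite Q"
  shows "schouten Q hh tt r s (basis (word_path v X)) (basis (word_path u Y))
       = star_contractions hh tt X Y - smul (sgnc ((r - 1) * (s - 1))) (star_contractions hh tt Y X)"
  unfolding schouten_eq_sum sum_subtractf smul_sum[symmetric]
    sum_emul_Dw_basis_closed_walks[OF assms(1,2,3,5)] sum_emul_Dw_basis_closed_walks[OF assms(2,1,4,5)] ..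

lemma walk_contraction:
  assumes "walk hh tt v v X" "walk hh tt u u Y" "i < length X" "j < length Y" "Y ! j = dual (X ! i)"
  shows "walk hh tt (dt hh tt (X ! i)) (dt hh tt (X ! i)) (cyclic_cut X i @ cyclic_cut Y j)"
  using walk_cyclic_cut[OF assms(1,3)] walk_cyclic_cut[OF assms(2,4)] assms(5)
  by (simp add: walk_appendI)

text \<open>
  Modulo the relations, the terms of [X,Y] in which the unstarred letter belongs to X are rotated
  so that every term is read starting with the remainder of X; the rotation contributes the
  second factor of contraction_sign.
\<close>

definition contraction_sign ::
  "int \<Rightarrow> int \<Rightarrow> 'a darrow list \<Rightarrow> nat \<Rightarrow> 'a darrow list \<Rightarrow> nat \<Rightarrow> complex" where
  "contraction_sign r s X i Y j = cyclic_cut_sign X i * cyclic_cut_sign Y j *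
     (if is_star (X ! i) then 1
      else - sgnc ((r - 1) * (s - 1)) * sgnc (int (nstars (cyclic_cut X i)) * int (nstars (cyclic_cut Y j))))"

definition contractions ::
  "('a \<Rightarrow> 'v) \<Rightarrow> ('a \<Rightarrow> 'v) \<Rightarrow> int \<Rightarrow> int \<Rightarrow> 'a darrow list \<Rightarrow> 'a darrow list \<Rightarrow> ('v,'a) elt" where
  "contractions hh tt r s X Y = (\<Sum>i<length X. \<Sum>j<length Y. if Y ! j = dual (X ! i)
     then smul (contraction_sign r s X i Y j)
            (basis (word_path (dt hh tt (X ! i)) (cyclic_cut X i @ cyclic_cut Y j)))
     else 0)"

lemma fin_supp_contractions [simp]: "fin_supp (contractions hh tt r s X Y)"
  by (simp add: contractions_def)

lemma contraction_rotation_congr: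
  assumes wX: "walk hh tt v v X" and wY: "walk hh tt u u Y"
    and aX: "arrows_in Q X" and aY: "arrows_in Q Y"
    and i: "i < length X" and j: "j < length Y" and dual_ij: "Y ! j = dual (X ! i)"
  shows "smul c (basis (word_path (dt hh tt (Y ! j)) (cyclic_cut Y j @ cyclic_cut X i)))
       - smul (c * sgnc (int (nstars (cyclic_cut Y j)) * int (nstars (cyclic_cut X i))))
           (basis (word_path (dt hh tt (X ! i)) (cyclic_cut X i @ cyclic_cut Y j)))
       \<in> relspan I Q hh tt"
proof (rule rotation_congr)
  have dual_ji: "X ! i = dual (Y ! j)"
    using dual_ij by simp
  show "walk hh tt (dt hh tt (Y ! j)) (dt hh tt (Y ! j)) (cyclic_cut Y j @ cyclic_cut X i)"
    by (rule walk_contraction[OF wY wX j i dual_ji])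
  show "walk hh tt (dt hh tt (X ! i)) (dt hh tt (X ! i)) (cyclic_cut X i @ cyclic_cut Y j)"
    by (rule walk_contraction[OF wX wY i j dual_ij])
  show "arrows_in Q (cyclic_cut Y j @ cyclic_cut X i)"
    using aX aY by (simp add: arrows_in_cyclic_cut)
  show "cyclic_cut Y j @ cyclic_cut X i = [] \<Longrightarrow> dt hh tt (Y ! j) = dt hh tt (X ! i)"
    using walk_cyclic_cut[OF wX i] dual_ij by simp
qed

lemma contractions_eq_star_contractions_add:
  "contractions hh tt r s X Y = star_contractions hh tt X Y
     + (\<Sum>i<length X. \<Sum>j<length Y. if \<not> is_star (X ! i) \<and> Y ! j = dual (X ! i)
          then smul (contraction_sign r s X i Y j)
                 (basis (word_path (dt hh tt (X ! i)) (cyclic_cut X i @ cyclic_cut Y j)))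
          else 0)"
  unfolding contractions_def star_contractions_def sum.distrib[symmetric]
  by (intro sum.cong refl) (auto simp: contraction_sign_def)

lemma smul_star_contractions_swap:
  "smul c (star_contractions hh tt Y X)
     = (\<Sum>i<length X. \<Sum>j<length Y. if \<not> is_star (X ! i) \<and> Y ! j = dual (X ! i)
          then smul (c * (cyclic_cut_sign Y j * cyclic_cut_sign X i))
                 (basis (word_path (dt hh tt (Y ! j)) (cyclic_cut Y j @ cyclic_cut X i)))
          else 0)"
  unfolding star_contractions_def smul_sum
  by (subst sum.swap) (intro sum.cong refl, auto simp: smul_smul eq_dual_iff)

lemma contraction_sign_unstarred:
  "\<not> is_star (X ! i) \<Longrightarrow> contraction_sign r s X i Y j
     = - (sgnc ((r - 1) * (s - 1)) * (cyclic_cut_sign Y j * cyclic_cut_sign X i)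
          * sgnc (int (nstars (cyclic_cut Y j)) * int (nstars (cyclic_cut X i))))"
  by (simp add: contraction_sign_def mult_ac)

lemma schouten_congr_contractions:
  assumes wX: "walk hh tt v v X" and wY: "walk hh tt u u Y"
    and aX: "arrows_in Q X" and aY: "arrows_in Q Y" and fQ: "finite Q"
  shows "schouten Q hh tt r s (basis (word_path v X)) (basis (word_path u Y)) - contractions hh tt r s X Y
       \<in> relspan I Q hh tt"
proof -
  let ?s = "sgnc ((r - 1) * (s - 1))"
  let ?C = "\<lambda>i j. \<not> is_star (X ! i) \<and> Y ! j = dual (X ! i)"
  let ?c = "\<lambda>i j. ?s * (cyclic_cut_sign Y j * cyclic_cut_sign X i)"
  let ?e = "\<lambda>i j. sgnc (int (nstars (cyclic_cut Y j)) * int (nstars (cyclic_cut X i)))"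
  let ?XY = "\<lambda>i j. basis (word_path (dt hh tt (X ! i)) (cyclic_cut X i @ cyclic_cut Y j))"
  let ?YX = "\<lambda>i j. basis (word_path (dt hh tt (Y ! j)) (cyclic_cut Y j @ cyclic_cut X i))"
  let ?rel = "\<lambda>i j. smul (?c i j) (?YX i j) - smul (?c i j * ?e i j) (?XY i j)"
  have unstarred:
    "(\<Sum>i<length X. \<Sum>j<length Y. if ?C i j then smul (contraction_sign r s X i Y j) (?XY i j) else 0)
      = - (\<Sum>i<length X. \<Sum>j<length Y. if ?C i j then smul (?c i j * ?e i j) (?XY i j) else 0)"
    unfolding sum_negf[symmetric]
    by (intro sum.cong refl) (auto simp: contraction_sign_unstarred smul_uminus)
  have if_diff: "(if b then x - y else 0) = (if b then x else 0) - (if b then y else 0)"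
    for b and x y :: "('v,'a) elt"
    by simp
  have "schouten Q hh tt r s (basis (word_path v X)) (basis (word_path u Y)) - contractions hh tt r s X Y
      = - (\<Sum>i<length X. \<Sum>j<length Y. if ?C i j then ?rel i j else 0)"
    unfolding schouten_closed_walks[OF wX wY aX aY fQ] contractions_eq_star_contractions_add
      smul_star_contractions_swap unstarred if_diff sum_subtractf
    by simp
  also have "\<dots> \<in> relspan I Q hh tt"
  proof (intro relspan_uminus relspan_sum)
    fix i j
    assume "i \<in> {..<length X}" "j \<in> {..<length Y}"
    thus "(if ?C i j then ?rel i j else 0) \<in> relspan I Q hh tt"
      using contraction_rotation_congr[OF wX wY aX aY] by simp
  qed
  finally show ?thesis .
qed

section \<open>Nested brackets\<close>

definition double_contractions ::
  "('a \<Rightarrow> 'v) \<Rightarrow> ('a \<Rightarrow> 'v) \<Rightarrow> 'a darrow list \<Rightarrow> 'a darrow list \<Rightarrow> 'a darrow list \<Rightarrow> ('v,'a) elt" where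
  "double_contractions hh tt X Y Z = (\<Sum>j<length Y. \<Sum>k<length Z. if Z ! k = dual (Y ! j) then
     smul (contraction_sign (int (nstars Y)) (int (nstars Z)) Y j Z k)
       (contractions hh tt (int (nstars X)) (int (nstars Y) + int (nstars Z) - 1) X
          (cyclic_cut Y j @ cyclic_cut Z k))
     else 0)"

lemma schouten_relspan_congr_right:
  assumes "y - y' \<in> relspan I Q hh tt" "fin_supp x" "fin_supp y'"
  shows "schouten Q hh tt r s x y = schouten Q hh tt r s x y'"
proof -
  have "fin_supp (y - y')"
    using relspan_Dw_eq_zero[OF assms(1)] by simp
  hence "schouten Q hh tt r s x (y' + (y - y')) = schouten Q hh tt r s x y' + schouten Q hh tt r s x (y - y')"
    using assms(2,3) by (rule_tac schouten_add_right)
  thus ?thesis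
    by (simp add: schouten_relspan_right[OF assms(1)])
qed

lemma schouten_contractions_right:
  "schouten Q hh tt r u (basis p) (contractions hh tt s t Y Z)
     = (\<Sum>j<length Y. \<Sum>k<length Z. if Z ! k = dual (Y ! j)
          then smul (contraction_sign s t Y j Z k)
                 (schouten Q hh tt r u (basis p)
                    (basis (word_path (dt hh tt (Y ! j)) (cyclic_cut Y j @ cyclic_cut Z k))))
          else 0)"
  unfolding contractions_def
  by (simp add: schouten_sum_right if_distrib[of "schouten Q hh tt r u (basis p)"])
     (intro sum.cong refl, simp add: schouten_smul_right[where f = "basis _"])

lemma schouten_nested_congr:
  assumes wX: "walk hh tt vx vx X" and wY: "walk hh tt vy vy Y" and wZ: "walk hh tt vz vz Z"
    and aX: "arrows_in Q X" and aY: "arrows_in Q Y" and aZ: "arrows_in Q Z" and fQ: "finite Q"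
  shows "schouten Q hh tt (int (nstars X)) (int (nstars Y) + int (nstars Z) - 1) (basis (word_path vx X))
           (schouten Q hh tt (int (nstars Y)) (int (nstars Z)) (basis (word_path vy Y)) (basis (word_path vz Z)))
         - double_contractions hh tt X Y Z
       \<in> relspan I Q hh tt"
proof -
  let ?r = "int (nstars X)" and ?s = "int (nstars Y)" and ?t = "int (nstars Z)"
  let ?bX = "basis (word_path vx X)"
  let ?W = "\<lambda>j k. cyclic_cut Y j @ cyclic_cut Z k"
  let ?F = "\<lambda>j k. schouten Q hh tt ?r (?s + ?t - 1) ?bX (basis (word_path (dt hh tt (Y ! j)) (?W j k)))
    - contractions hh tt ?r (?s + ?t - 1) X (?W j k)"
  have congr: "schouten Q hh tt ?r (?s + ?t - 1) ?bX
          (schouten Q hh tt ?s ?t (basis (word_path vy Y)) (basis (word_path vz Z)))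
      = schouten Q hh tt ?r (?s + ?t - 1) ?bX (contractions hh tt ?s ?t Y Z)"
    using schouten_congr_contractions[OF wY wZ aY aZ fQ] by (rule schouten_relspan_congr_right) simp_all
  have "schouten Q hh tt ?r (?s + ?t - 1) ?bX (contractions hh tt ?s ?t Y Z) - double_contractions hh tt X Y Z
      = (\<Sum>j<length Y. \<Sum>k<length Z.
           if Z ! k = dual (Y ! j) then smul (contraction_sign ?s ?t Y j Z k) (?F j k) else 0)"
    unfolding schouten_contractions_right double_contractions_def sum_subtractf[symmetric]
    by (intro sum.cong refl) (auto simp: smul_diff)
  also have "\<dots> \<in> relspan I Q hh tt"
  proof (intro relspan_sum)
    fix j k
    assume "j \<in> {..<length Y}" "k \<in> {..<length Z}"
    moreover have "arrows_in Q (?W j k)"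
      using aY aZ by (simp add: arrows_in_cyclic_cut)
    ultimately show "(if Z ! k = dual (Y ! j) then smul (contraction_sign ?s ?t Y j Z k) (?F j k) else 0)
      \<in> relspan I Q hh tt"
      using walk_contraction[OF wY wZ] schouten_congr_contractions[OF wX _ aX _ fQ]
      by (simp add: relspan_smul)
  qed
  finally show ?thesis
    unfolding congr .
qed

definition cut_index :: "nat \<Rightarrow> nat \<Rightarrow> nat \<Rightarrow> nat" where
  "cut_index n j j' = (if j < j' then j' - Suc j else n - Suc j + j')"

lemma cut_index_less: "j < n \<Longrightarrow> j' < n \<Longrightarrow> j' \<noteq> j \<Longrightarrow> cut_index n j j' < n - 1"
  by (auto simp: cut_index_def)

lemma nth_cyclic_cut_shift:
  assumes "j < length Y" "j' < length Y" "j' \<noteq> j"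
  shows "cyclic_cut Y j ! cut_index (length Y) j j' = Y ! j'"
  using assms by (auto simp: cyclic_cut_def cut_index_def nth_append)

lemma nth_cyclic_cut_append_shift:
  assumes "j < length Y" "j' < length Y" "j' \<noteq> j"
  shows "(cyclic_cut Y j @ V) ! cut_index (length Y) j j' = Y ! j'"
  using assms cut_index_less[OF assms] by (simp add: nth_append length_cyclic_cut nth_cyclic_cut_shift)

lemma bij_betw_cut_index:
  assumes "j < n"
  shows "bij_betw (cut_index n j) ({..<n} - {j}) {..<n - 1}"
  by (rule bij_betw_byWitness[where f' = "\<lambda>p. if p < n - Suc j then Suc j + p else p - (n - Suc j)"])
     (use assms in \<open>auto simp: cut_index_def\<close>)

lemma sum_reindex_cut_index:
  assumes "j < n"
  shows "(\<Sum>p<n - 1. F p) = (\<Sum>j'<n. if j' \<noteq> j then F (cut_index n j j') else (0::'b::comm_monoid_add))"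
proof -
  have "(\<Sum>j'<n. if j' \<noteq> j then F (cut_index n j j') else 0) = (\<Sum>j'\<in>{..<n} - {j}. F (cut_index n j j'))"
    by (rule sum.mono_neutral_cong_right) auto
  also have "\<dots> = (\<Sum>p<n - 1. F p)"
    by (rule sum.reindex_bij_betw[OF bij_betw_cut_index[OF assms]])
  finally show ?thesis by simp
qed

definition contraction_term :: "('a \<Rightarrow> 'v) \<Rightarrow> ('a \<Rightarrow> 'v) \<Rightarrow> int \<Rightarrow> int
    \<Rightarrow> 'a darrow list \<Rightarrow> 'a darrow list \<Rightarrow> nat \<Rightarrow> nat \<Rightarrow> ('v,'a) elt" where
  "contraction_term hh tt r u X W i p = (if W ! p = dual (X ! i)
     then smul (contraction_sign r u X i W p)
            (basis (word_path (dt hh tt (X ! i)) (cyclic_cut X i @ cyclic_cut W p)))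
     else 0)"

definition double_contractions_left ::
  "('a \<Rightarrow> 'v) \<Rightarrow> ('a \<Rightarrow> 'v) \<Rightarrow> 'a darrow list \<Rightarrow> 'a darrow list \<Rightarrow> 'a darrow list \<Rightarrow> ('v,'a) elt" where
  "double_contractions_left hh tt X Y Z = (\<Sum>j<length Y. \<Sum>k<length Z. if Z ! k = dual (Y ! j)
     then smul (contraction_sign (int (nstars Y)) (int (nstars Z)) Y j Z k)
       (\<Sum>i<length X. \<Sum>p<length (cyclic_cut Y j).
          contraction_term hh tt (int (nstars X)) (int (nstars Y) + int (nstars Z) - 1) X
            (cyclic_cut Y j @ cyclic_cut Z k) i p)
     else 0)"

definition double_contractions_right ::
  "('a \<Rightarrow> 'v) \<Rightarrow> ('a \<Rightarrow> 'v) \<Rightarrow> 'a darrow list \<Rightarrow> 'a darrow list \<Rightarrow> 'a darrow list \<Rightarrow> ('v,'a) elt" where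
  "double_contractions_right hh tt X Y Z = (\<Sum>j<length Y. \<Sum>k<length Z. if Z ! k = dual (Y ! j)
     then smul (contraction_sign (int (nstars Y)) (int (nstars Z)) Y j Z k)
       (\<Sum>i<length X. \<Sum>q<length (cyclic_cut Z k).
          contraction_term hh tt (int (nstars X)) (int (nstars Y) + int (nstars Z) - 1) X
            (cyclic_cut Y j @ cyclic_cut Z k) i (length (cyclic_cut Y j) + q))
     else 0)"

lemma double_contractions_split:
  "double_contractions hh tt X Y Z
     = double_contractions_left hh tt X Y Z + double_contractions_right hh tt X Y Z"
  unfolding double_contractions_def double_contractions_left_def double_contractions_right_def
    contractions_def sum.distrib[symmetric]
  by (intro sum.cong refl)
     (auto simp: contraction_term_def[symmetric] sum_lessThan_add_split sum.distrib smul_add)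

definition nested_cond ::
  "'a darrow list \<Rightarrow> 'a darrow list \<Rightarrow> 'a darrow list \<Rightarrow> nat \<Rightarrow> nat \<Rightarrow> nat \<Rightarrow> nat \<Rightarrow> bool" where
  "nested_cond X Y Z i j j' k \<longleftrightarrow> j' \<noteq> j \<and> Y ! j' = dual (X ! i) \<and> Z ! k = dual (Y ! j)"

definition nested_word_left ::
  "'a darrow list \<Rightarrow> 'a darrow list \<Rightarrow> 'a darrow list \<Rightarrow> nat \<Rightarrow> nat \<Rightarrow> nat \<Rightarrow> nat \<Rightarrow> 'a darrow list" where
  "nested_word_left X Y Z i j j' k =
     cyclic_cut X i @ cyclic_cut (cyclic_cut Y j @ cyclic_cut Z k) (cut_index (length Y) j j')"

definition nested_coef_left ::
  "'a darrow list \<Rightarrow> 'a darrow list \<Rightarrow> 'a darrow list \<Rightarrow> nat \<Rightarrow> nat \<Rightarrow> nat \<Rightarrow> nat \<Rightarrow> complex" where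
  "nested_coef_left X Y Z i j j' k =
     sgnc ((int (nstars X) - 1) * (int (nstars Z) - 1))
     * contraction_sign (int (nstars Y)) (int (nstars Z)) Y j Z k
     * contraction_sign (int (nstars X)) (int (nstars Y) + int (nstars Z) - 1) X i
         (cyclic_cut Y j @ cyclic_cut Z k) (cut_index (length Y) j j')"

definition nested_term_left :: "('a \<Rightarrow> 'v) \<Rightarrow> ('a \<Rightarrow> 'v)
    \<Rightarrow> 'a darrow list \<Rightarrow> 'a darrow list \<Rightarrow> 'a darrow list \<Rightarrow> nat \<Rightarrow> nat \<Rightarrow> nat \<Rightarrow> nat \<Rightarrow> ('v,'a) elt" where
  "nested_term_left hh tt X Y Z i j j' k = smul (nested_coef_left X Y Z i j j' k)
     (basis (word_path (dt hh tt (X ! i)) (nested_word_left X Y Z i j j' k)))"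

definition nested_word_right ::
  "'a darrow list \<Rightarrow> 'a darrow list \<Rightarrow> 'a darrow list \<Rightarrow> nat \<Rightarrow> nat \<Rightarrow> nat \<Rightarrow> nat \<Rightarrow> 'a darrow list" where
  "nested_word_right X Y Z i j j' k =
     cyclic_cut Z k @ cyclic_cut (cyclic_cut X i @ cyclic_cut Y j')
       (length (cyclic_cut X i) + cut_index (length Y) j' j)"

definition nested_coef_right ::
  "'a darrow list \<Rightarrow> 'a darrow list \<Rightarrow> 'a darrow list \<Rightarrow> nat \<Rightarrow> nat \<Rightarrow> nat \<Rightarrow> nat \<Rightarrow> complex" where
  "nested_coef_right X Y Z i j j' k =
     sgnc ((int (nstars Z) - 1) * (int (nstars Y) - 1))
     * contraction_sign (int (nstars X)) (int (nstars Y)) X i Y j'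
     * contraction_sign (int (nstars Z)) (int (nstars X) + int (nstars Y) - 1) Z k
         (cyclic_cut X i @ cyclic_cut Y j') (length (cyclic_cut X i) + cut_index (length Y) j' j)"

definition nested_term_right :: "('a \<Rightarrow> 'v) \<Rightarrow> ('a \<Rightarrow> 'v)
    \<Rightarrow> 'a darrow list \<Rightarrow> 'a darrow list \<Rightarrow> 'a darrow list \<Rightarrow> nat \<Rightarrow> nat \<Rightarrow> nat \<Rightarrow> nat \<Rightarrow> ('v,'a) elt" where
  "nested_term_right hh tt X Y Z i j j' k = smul (nested_coef_right X Y Z i j j' k)
     (basis (word_path (dt hh tt (Z ! k)) (nested_word_right X Y Z i j j' k)))"

lemma sum_contraction_term_cut_left:
  assumes "j < length Y"
  shows "(\<Sum>p<length (cyclic_cut Y j). contraction_term hh tt r u X (cyclic_cut Y j @ V) i p)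
       = (\<Sum>j'<length Y. if j' \<noteq> j \<and> Y ! j' = dual (X ! i)
           then smul (contraction_sign r u X i (cyclic_cut Y j @ V) (cut_index (length Y) j j'))
                  (basis (word_path (dt hh tt (X ! i))
                     (cyclic_cut X i @ cyclic_cut (cyclic_cut Y j @ V) (cut_index (length Y) j j'))))
           else 0)"
  unfolding length_cyclic_cut[OF assms] sum_reindex_cut_index[OF assms]
  using assms by (intro sum.cong refl) (auto simp: contraction_term_def nth_cyclic_cut_append_shift)

lemma sum_contraction_term_cut_right:
  assumes "j < length Y"
  shows "(\<Sum>q<length (cyclic_cut Y j). contraction_term hh tt r u X (U @ cyclic_cut Y j) i (length U + q))
       = (\<Sum>j'<length Y. if j' \<noteq> j \<and> Y ! j' = dual (X ! i)
           then smul (contraction_sign r u X i (U @ cyclic_cut Y j) (length U + cut_index (length Y) j j'))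
                  (basis (word_path (dt hh tt (X ! i))
                     (cyclic_cut X i @ cyclic_cut (U @ cyclic_cut Y j) (length U + cut_index (length Y) j j'))))
           else 0)"
  unfolding length_cyclic_cut[OF assms] sum_reindex_cut_index[OF assms]
  using assms by (intro sum.cong refl) (auto simp: contraction_term_def nth_append nth_cyclic_cut_shift)

lemma smul_double_contractions_left:
  "smul (sgnc ((int (nstars X) - 1) * (int (nstars Z) - 1))) (double_contractions_left hh tt X Y Z)
   = (\<Sum>i<length X. \<Sum>j<length Y. \<Sum>j'<length Y. \<Sum>k<length Z.
        if nested_cond X Y Z i j j' k then nested_term_left hh tt X Y Z i j j' k else 0)"
proof -
  let ?s = "sgnc ((int (nstars X) - 1) * (int (nstars Z) - 1))"
  let ?H = "\<lambda>i j j' k. if nested_cond X Y Z i j j' k then nested_term_left hh tt X Y Z i j j' k else 0"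
  have "smul ?s (double_contractions_left hh tt X Y Z)
      = (\<Sum>j<length Y. \<Sum>k<length Z. \<Sum>i<length X. \<Sum>j'<length Y. ?H i j j' k)"
    unfolding double_contractions_left_def smul_sum[of ?s]
  proof (intro sum.cong refl)
    fix j k
    assume "j \<in> {..<length Y}" "k \<in> {..<length Z}"
    thus "smul ?s (if Z ! k = dual (Y ! j)
          then smul (contraction_sign (int (nstars Y)) (int (nstars Z)) Y j Z k)
            (\<Sum>i<length X. \<Sum>p<length (cyclic_cut Y j).
               contraction_term hh tt (int (nstars X)) (int (nstars Y) + int (nstars Z) - 1) X
                 (cyclic_cut Y j @ cyclic_cut Z k) i p)
          else 0)
      = (\<Sum>i<length X. \<Sum>j'<length Y. ?H i j j' k)"
      by (auto simp: sum_contraction_term_cut_left smul_sum smul_smul nested_cond_def nested_term_left_def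
          nested_coef_left_def nested_word_left_def mult.assoc intro!: sum.cong)
  qed
  also have "\<dots> = (\<Sum>i<length X. \<Sum>j<length Y. \<Sum>j'<length Y. \<Sum>k<length Z. ?H i j j' k)"
    by (subst sum.swap, subst (2) sum.swap, rule sum.cong[OF refl], subst (2) sum.swap, rule refl)
  finally show ?thesis .
qed

lemma smul_double_contractions_right:
  "smul (sgnc ((int (nstars Z) - 1) * (int (nstars Y) - 1))) (double_contractions_right hh tt Z X Y)
   = (\<Sum>i<length X. \<Sum>j<length Y. \<Sum>j'<length Y. \<Sum>k<length Z.
        if nested_cond X Y Z i j j' k then nested_term_right hh tt X Y Z i j j' k else 0)"
proof -
  let ?s = "sgnc ((int (nstars Z) - 1) * (int (nstars Y) - 1))"
  let ?H = "\<lambda>i j j' k. if nested_cond X Y Z i j j' k then nested_term_right hh tt X Y Z i j j' k else 0"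
  have "smul ?s (double_contractions_right hh tt Z X Y)
      = (\<Sum>i<length X. \<Sum>j'<length Y. \<Sum>k<length Z. \<Sum>j<length Y. ?H i j j' k)"
    unfolding double_contractions_right_def smul_sum[of ?s]
  proof (intro sum.cong refl)
    fix i j'
    assume "i \<in> {..<length X}" "j' \<in> {..<length Y}"
    thus "smul ?s (if Y ! j' = dual (X ! i)
          then smul (contraction_sign (int (nstars X)) (int (nstars Y)) X i Y j')
            (\<Sum>k<length Z. \<Sum>q<length (cyclic_cut Y j').
               contraction_term hh tt (int (nstars Z)) (int (nstars X) + int (nstars Y) - 1) Z
                 (cyclic_cut X i @ cyclic_cut Y j') k (length (cyclic_cut X i) + q))
          else 0)
      = (\<Sum>k<length Z. \<Sum>j<length Y. ?H i j j' k)"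
      by (auto simp: sum_contraction_term_cut_right smul_sum smul_smul nested_cond_def nested_term_right_def
          nested_coef_right_def nested_word_right_def mult.assoc eq_dual_iff intro!: sum.cong)
  qed
  also have "\<dots> = (\<Sum>i<length X. \<Sum>j<length Y. \<Sum>j'<length Y. \<Sum>k<length Z. ?H i j j' k)"
    by (rule sum.cong[OF refl], subst (2) sum.swap, subst sum.swap, rule refl)
  finally show ?thesis .
qed

text \<open>Needed only in the degenerate case where the three words are used up completely.\<close>

lemma nested_word_Nil_endpoints:
  assumes wX: "walk hh tt vx vx X" and wY: "walk hh tt vy vy Y" and wZ: "walk hh tt vz vz Z"
    and i: "i < length X" and j: "j < length Y" and j': "j' < length Y" and jj: "j' \<noteq> j"
    and k: "k < length Z" and d1: "Y ! j' = dual (X ! i)" and d2: "Z ! k = dual (Y ! j)"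
    and Nil: "cyclic_cut X i @ cyclic_cut (cyclic_cut Y j @ cyclic_cut Z k) (cut_index (length Y) j j') = []"
  shows "dt hh tt (X ! i) = dt hh tt (Z ! k)"
proof -
  let ?W = "cyclic_cut Y j @ cyclic_cut Z k"
  have lenY: "length (cyclic_cut Y j) = length Y - 1" "1 \<le> length Y - 1"
    using j j' jj by (auto simp: length_cyclic_cut)
  have "cut_index (length Y) j j' < length ?W"
    using cut_index_less[OF j j' jj] lenY by simp
  hence "length ?W = 1"
    using Nil length_cyclic_cut[of "cut_index (length Y) j j'" ?W] by simp
  hence "length (cyclic_cut Y j) + length (cyclic_cut Z k) = 1"
    by simp
  hence "length (cyclic_cut Z k) = 0" and lenY1: "length (cyclic_cut Y j) = 1"
    using lenY by linarith+
  hence Z: "cyclic_cut Z k = []"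
    by simp
  have "cut_index (length Y) j j' = 0"
    using cut_index_less[OF j j' jj] lenY lenY1 by simp
  hence "cyclic_cut Y j = [Y ! j']"
    using nth_cyclic_cut_shift[OF j j' jj] lenY1 by (auto simp: length_Suc_conv)
  thus ?thesis
    using walk_cyclic_cut[OF wY j] walk_cyclic_cut[OF wZ k] d1 d2 Z by auto
qed

lemma nested_terms_congr:
  assumes wX: "walk hh tt vx vx X" and wY: "walk hh tt vy vy Y" and wZ: "walk hh tt vz vz Z"
    and aX: "arrows_in Q X" and aY: "arrows_in Q Y" and aZ: "arrows_in Q Z"
    and i: "i < length X" and j: "j < length Y" and j': "j' < length Y" and jj: "j' \<noteq> j"
    and k: "k < length Z" and d1: "Y ! j' = dual (X ! i)" and d2: "Z ! k = dual (Y ! j)"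
    and PR: "nested_word_left X Y Z i j j' k = P @ R"
    and RP: "nested_word_right X Y Z i j j' k = R @ P"
    and coef: "nested_coef_right X Y Z i j j' k
      = - (nested_coef_left X Y Z i j j' k * sgnc (int (nstars P) * int (nstars R)))"
  shows "nested_term_left hh tt X Y Z i j j' k + nested_term_right hh tt X Y Z i j j' k
       \<in> relspan I Q hh tt"
  unfolding nested_term_left_def nested_term_right_def PR RP coef smul_uminus diff_conv_add_uminus[symmetric]
proof (rule rotation_congr)
  let ?W = "cyclic_cut Y j @ cyclic_cut Z k" and ?p = "cut_index (length Y) j j'"
  let ?W' = "cyclic_cut X i @ cyclic_cut Y j'"
  let ?p' = "length (cyclic_cut X i) + cut_index (length Y) j' j"
  have "?p < length ?W" "?W ! ?p = dual (X ! i)"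
    using cut_index_less[OF j j' jj] nth_cyclic_cut_append_shift[OF j j' jj] d1 j
    by (simp_all add: length_cyclic_cut)
  from walk_contraction[OF wX walk_contraction[OF wY wZ j k d2] i this]
  show "walk hh tt (dt hh tt (X ! i)) (dt hh tt (X ! i)) (P @ R)"
    using PR by (simp add: nested_word_left_def)
  have "?p' < length ?W'" "?W' ! ?p' = dual (Z ! k)"
    using cut_index_less[OF j' j jj[symmetric]] nth_cyclic_cut_append_shift[OF j' j jj[symmetric]] d2 j'
    by (simp_all add: length_cyclic_cut nth_append)
  from walk_contraction[OF wZ walk_contraction[OF wX wY i j' d1] k this]
  show "walk hh tt (dt hh tt (Z ! k)) (dt hh tt (Z ! k)) (R @ P)"
    using RP by (simp add: nested_word_right_def)
  show "arrows_in Q (P @ R)"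
    using aX aY aZ PR[symmetric] by (simp add: nested_word_left_def arrows_in_cyclic_cut)
  show "P @ R = [] \<Longrightarrow> dt hh tt (X ! i) = dt hh tt (Z ! k)"
    using nested_word_Nil_endpoints[OF wX wY wZ i j j' jj k d1 d2] PR by (simp add: nested_word_left_def)
qed

lemma nested_terms_congr_lt:
  fixes X1 X2 Y1 Y2 Y3 Z1 Z2 :: "'a darrow list"
  assumes wX: "walk hh tt vx vx (X1 @ x # X2)" and wY: "walk hh tt vy vy (Y1 @ y # Y2 @ y' # Y3)"
    and wZ: "walk hh tt vz vz (Z1 @ z # Z2)"
    and aX: "arrows_in Q (X1 @ x # X2)" and aY: "arrows_in Q (Y1 @ y # Y2 @ y' # Y3)"
    and aZ: "arrows_in Q (Z1 @ z # Z2)"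
    and d1: "y' = dual x" and d2: "z = dual y"
  shows "nested_term_left hh tt (X1 @ x # X2) (Y1 @ y # Y2 @ y' # Y3) (Z1 @ z # Z2)
           (length X1) (length Y1) (length Y1 + Suc (length Y2)) (length Z1)
       + nested_term_right hh tt (X1 @ x # X2) (Y1 @ y # Y2 @ y' # Y3) (Z1 @ z # Z2)
           (length X1) (length Y1) (length Y1 + Suc (length Y2)) (length Z1)
       \<in> relspan I Q hh tt"
proof (rule nested_terms_congr[OF wX wY wZ aX aY aZ, where P = "X2 @ X1 @ Y3 @ Y1" and R = "Z2 @ Z1 @ Y2"])
  have "is_star y' = (\<not> is_star x)" "is_star z = (\<not> is_star y)"
    using d1 d2 by auto
  thus "nested_coef_right (X1 @ x # X2) (Y1 @ y # Y2 @ y' # Y3) (Z1 @ z # Z2)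
           (length X1) (length Y1) (length Y1 + Suc (length Y2)) (length Z1)
      = - (nested_coef_left (X1 @ x # X2) (Y1 @ y # Y2 @ y' # Y3) (Z1 @ z # Z2)
             (length X1) (length Y1) (length Y1 + Suc (length Y2)) (length Z1)
           * sgnc (int (nstars (X2 @ X1 @ Y3 @ Y1)) * int (nstars (Z2 @ Z1 @ Y2))))"
    unfolding nested_coef_left_def nested_coef_right_def contraction_sign_def
    by (cases "is_star x"; cases "is_star y";
        simp add: cyclic_cut_def cyclic_cut_sign_def cut_index_def nth_append sgnc_add[symmetric]
          sgnc_eq_iff even_add even_mult_iff; argo)
qed (simp_all add: nested_word_left_def nested_word_right_def cyclic_cut_def cut_index_def nth_append
       d1[symmetric] d2[symmetric])

lemma nested_terms_congr_gt:
  fixes X1 X2 Y1 Y2 Y3 Z1 Z2 :: "'a darrow list"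
  assumes wX: "walk hh tt vx vx (X1 @ x # X2)" and wY: "walk hh tt vy vy (Y1 @ y' # Y2 @ y # Y3)"
    and wZ: "walk hh tt vz vz (Z1 @ z # Z2)"
    and aX: "arrows_in Q (X1 @ x # X2)" and aY: "arrows_in Q (Y1 @ y' # Y2 @ y # Y3)"
    and aZ: "arrows_in Q (Z1 @ z # Z2)"
    and d1: "y' = dual x" and d2: "z = dual y"
  shows "nested_term_left hh tt (X1 @ x # X2) (Y1 @ y' # Y2 @ y # Y3) (Z1 @ z # Z2)
           (length X1) (length Y1 + Suc (length Y2)) (length Y1) (length Z1)
       + nested_term_right hh tt (X1 @ x # X2) (Y1 @ y' # Y2 @ y # Y3) (Z1 @ z # Z2)
           (length X1) (length Y1 + Suc (length Y2)) (length Y1) (length Z1)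
       \<in> relspan I Q hh tt"
proof (rule nested_terms_congr[OF wX wY wZ aX aY aZ, where P = "X2 @ X1 @ Y2" and R = "Z2 @ Z1 @ Y3 @ Y1"])
  have "is_star y' = (\<not> is_star x)" "is_star z = (\<not> is_star y)"
    using d1 d2 by auto
  thus "nested_coef_right (X1 @ x # X2) (Y1 @ y' # Y2 @ y # Y3) (Z1 @ z # Z2)
           (length X1) (length Y1 + Suc (length Y2)) (length Y1) (length Z1)
      = - (nested_coef_left (X1 @ x # X2) (Y1 @ y' # Y2 @ y # Y3) (Z1 @ z # Z2)
             (length X1) (length Y1 + Suc (length Y2)) (length Y1) (length Z1)
           * sgnc (int (nstars (X2 @ X1 @ Y2)) * int (nstars (Z2 @ Z1 @ Y3 @ Y1))))"
    unfolding nested_coef_left_def nested_coef_right_def contraction_sign_def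
    by (cases "is_star x"; cases "is_star y";
        simp add: cyclic_cut_def cyclic_cut_sign_def cut_index_def nth_append sgnc_add[symmetric]
          sgnc_eq_iff even_add even_mult_iff; argo)
qed (simp_all add: nested_word_left_def nested_word_right_def cyclic_cut_def cut_index_def nth_append
       d1[symmetric] d2[symmetric])

lemma obtain_split_nth:
  assumes "i < length X"
  obtains X1 x X2 where "X = X1 @ x # X2" "i = length X1" "x = X ! i"
proof -
  have "X = take i X @ X ! i # drop (Suc i) X" "i = length (take i X)"
    using assms by (simp_all add: id_take_nth_drop)
  thus ?thesis
    using that by blast
qed

lemma obtain_split_two_nth:
  assumes "j < j'" "j' < length Y"
  obtains Y1 y Y2 y' Y3 where "Y = Y1 @ y # Y2 @ y' # Y3" "j = length Y1"
    "j' = length Y1 + Suc (length Y2)" "y = Y ! j" "y' = Y ! j'"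
proof -
  let ?D = "drop (Suc j) Y" and ?m = "j' - Suc j"
  have "Y = take j Y @ Y ! j # ?D"
    using assms by (simp add: id_take_nth_drop)
  moreover have "?D = take ?m ?D @ drop ?m ?D"
    by (rule append_take_drop_id[symmetric])
  moreover have "drop ?m ?D = Y ! j' # drop (Suc j') Y"
    using assms by (simp add: Cons_nth_drop_Suc)
  ultimately have "Y = take j Y @ Y ! j # take ?m ?D @ Y ! j' # drop (Suc j') Y"
    by (metis append.assoc)
  moreover have "j = length (take j Y)" "j' = length (take j Y) + Suc (length (take ?m ?D))"
    using assms by auto
  ultimately show ?thesis
    using that by blast
qed

lemma nested_terms_pair_congr:
  assumes wX: "walk hh tt vx vx X" and wY: "walk hh tt vy vy Y" and wZ: "walk hh tt vz vz Z"
    and aX: "arrows_in Q X" and aY: "arrows_in Q Y" and aZ: "arrows_in Q Z"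
    and i: "i < length X" and j: "j < length Y" and j': "j' < length Y" and jj: "j \<noteq> j'"
    and k: "k < length Z" and d1: "Y ! j' = dual (X ! i)" and d2: "Z ! k = dual (Y ! j)"
  shows "nested_term_left hh tt X Y Z i j j' k + nested_term_right hh tt X Y Z i j j' k
       \<in> relspan I Q hh tt"
proof -
  obtain X1 x X2 where eX: "X = X1 @ x # X2" "i = length X1" "x = X ! i"
    using obtain_split_nth[OF i] by blast
  obtain Z1 z Z2 where eZ: "Z = Z1 @ z # Z2" "k = length Z1" "z = Z ! k"
    using obtain_split_nth[OF k] by blast
  show ?thesis
  proof (cases "j < j'")
    case True
    obtain Y1 y Y2 y' Y3 where eY: "Y = Y1 @ y # Y2 @ y' # Y3" "j = length Y1"
      "j' = length Y1 + Suc (length Y2)" "y = Y ! j" "y' = Y ! j'"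
      using obtain_split_two_nth[OF True j'] by blast
    have "y' = dual x" "z = dual y"
      using d1 d2 eX(3) eY(4,5) eZ(3) by simp_all
    from nested_terms_congr_lt[OF wX[unfolded eX(1)] wY[unfolded eY(1)] wZ[unfolded eZ(1)]
        aX[unfolded eX(1)] aY[unfolded eY(1)] aZ[unfolded eZ(1)] this]
    show ?thesis
      unfolding eX(1,2) eY(1,2,3) eZ(1,2) .
  next
    case False
    hence "j' < j"
      using jj by simp
    then obtain Y1 y' Y2 y Y3 where eY: "Y = Y1 @ y' # Y2 @ y # Y3" "j' = length Y1"
      "j = length Y1 + Suc (length Y2)" "y' = Y ! j'" "y = Y ! j"
      using obtain_split_two_nth[OF _ j] by blast
    have "y' = dual x" "z = dual y"
      using d1 d2 eX(3) eY(4,5) eZ(3) by simp_all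
    from nested_terms_congr_gt[OF wX[unfolded eX(1)] wY[unfolded eY(1)] wZ[unfolded eZ(1)]
        aX[unfolded eX(1)] aY[unfolded eY(1)] aZ[unfolded eZ(1)] this]
    show ?thesis
      unfolding eX(1,2) eY(1,2,3) eZ(1,2) .
  qed
qed

lemma double_contractions_pair_congr:
  assumes wX: "walk hh tt vx vx X" and wY: "walk hh tt vy vy Y" and wZ: "walk hh tt vz vz Z"
    and aX: "arrows_in Q X" and aY: "arrows_in Q Y" and aZ: "arrows_in Q Z"
  shows "smul (sgnc ((int (nstars X) - 1) * (int (nstars Z) - 1))) (double_contractions_left hh tt X Y Z)
       + smul (sgnc ((int (nstars Z) - 1) * (int (nstars Y) - 1))) (double_contractions_right hh tt Z X Y)
       \<in> relspan I Q hh tt"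
  unfolding smul_double_contractions_left smul_double_contractions_right sum.distrib[symmetric]
proof (intro relspan_sum)
  fix i j j' k
  assume "i \<in> {..<length X}" "j \<in> {..<length Y}" "j' \<in> {..<length Y}" "k \<in> {..<length Z}"
  thus "(if nested_cond X Y Z i j j' k then nested_term_left hh tt X Y Z i j j' k else 0)
      + (if nested_cond X Y Z i j j' k then nested_term_right hh tt X Y Z i j j' k else 0)
      \<in> relspan I Q hh tt"
    using nested_terms_pair_congr[OF wX wY wZ aX aY aZ, of i j j' k] by (auto simp: nested_cond_def)
qed

section \<open>The Jacobi identity\<close>

definition jacobiator :: "'a set \<Rightarrow> ('a \<Rightarrow> 'v) \<Rightarrow> ('a \<Rightarrow> 'v) \<Rightarrow> nat \<Rightarrow> nat \<Rightarrow> nat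
    \<Rightarrow> ('v,'a) elt \<Rightarrow> ('v,'a) elt \<Rightarrow> ('v,'a) elt \<Rightarrow> ('v,'a) elt" where
  "jacobiator Q hh tt r s t A B C =
     smul (sgnc ((int r - 1) * (int t - 1)))
       (schouten Q hh tt (int r) (int s + int t - 1) A (schouten Q hh tt (int s) (int t) B C))
   + smul (sgnc ((int s - 1) * (int r - 1)))
       (schouten Q hh tt (int s) (int t + int r - 1) B (schouten Q hh tt (int t) (int r) C A))
   + smul (sgnc ((int t - 1) * (int s - 1)))
       (schouten Q hh tt (int t) (int r + int s - 1) C (schouten Q hh tt (int r) (int s) A B))"

lemma jacobiator_rotate: "jacobiator Q hh tt r s t A B C = jacobiator Q hh tt s t r B C A"
  unfolding jacobiator_def by (simp add: algebra_simps)

lemma jacobiator_closed_walks: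
  assumes wX: "walk hh tt vx vx X" and wY: "walk hh tt vy vy Y" and wZ: "walk hh tt vz vz Z"
    and aX: "arrows_in Q X" and aY: "arrows_in Q Y" and aZ: "arrows_in Q Z" and fQ: "finite Q"
  shows "jacobiator Q hh tt (nstars X) (nstars Y) (nstars Z)
           (basis (word_path vx X)) (basis (word_path vy Y)) (basis (word_path vz Z))
       \<in> relspan I Q hh tt"
proof -
  let ?x = "basis (word_path vx X)" and ?y = "basis (word_path vy Y)" and ?z = "basis (word_path vz Z)"
  let ?r = "int (nstars X)" and ?s = "int (nstars Y)" and ?t = "int (nstars Z)"
  let ?a = "sgnc ((?r - 1) * (?t - 1))" and ?b = "sgnc ((?s - 1) * (?r - 1))"
    and ?c = "sgnc ((?t - 1) * (?s - 1))"
  let ?A = "schouten Q hh tt ?r (?s + ?t - 1) ?x (schouten Q hh tt ?s ?t ?y ?z)"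
  let ?B = "schouten Q hh tt ?s (?t + ?r - 1) ?y (schouten Q hh tt ?t ?r ?z ?x)"
  let ?C = "schouten Q hh tt ?t (?r + ?s - 1) ?z (schouten Q hh tt ?r ?s ?x ?y)"
  let ?D = "double_contractions hh tt"
  let ?L = "double_contractions_left hh tt" and ?R = "double_contractions_right hh tt"
  have "jacobiator Q hh tt (nstars X) (nstars Y) (nstars Z) ?x ?y ?z
     = (smul ?a (?A - ?D X Y Z) + smul ?b (?B - ?D Y Z X) + smul ?c (?C - ?D Z X Y))
       + ((smul ?a (?L X Y Z) + smul ?c (?R Z X Y)) + (smul ?b (?L Y Z X) + smul ?a (?R X Y Z))
          + (smul ?c (?L Z X Y) + smul ?b (?R Y Z X)))"
    by (simp add: jacobiator_def double_contractions_split smul_diff smul_add algebra_simps)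
  moreover have "?A - ?D X Y Z \<in> relspan I Q hh tt" "?B - ?D Y Z X \<in> relspan I Q hh tt"
    "?C - ?D Z X Y \<in> relspan I Q hh tt"
    using schouten_nested_congr[OF wX wY wZ aX aY aZ fQ] schouten_nested_congr[OF wY wZ wX aY aZ aX fQ]
      schouten_nested_congr[OF wZ wX wY aZ aX aY fQ]
    by simp_all
  moreover have "smul ?a (?L X Y Z) + smul ?c (?R Z X Y) \<in> relspan I Q hh tt"
    "smul ?b (?L Y Z X) + smul ?a (?R X Y Z) \<in> relspan I Q hh tt"
    "smul ?c (?L Z X Y) + smul ?b (?R Y Z X) \<in> relspan I Q hh tt"
    using double_contractions_pair_congr[OF wX wY wZ aX aY aZ]
      double_contractions_pair_congr[OF wY wZ wX aY aZ aX] double_contractions_pair_congr[OF wZ wX wY aZ aX aY]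
    by (simp_all add: mult.commute)
  ultimately show ?thesis
    by (metis relspan_add relspan_smul)
qed

lemma valid_path_closed_walk_or_Dw_zero:
  assumes "valid_path I Q hh tt p"
  shows "(\<exists>v X. p = word_path v X \<and> walk hh tt v v X \<and> arrows_in Q X \<and> nstars X = path_stars p)
       \<or> (\<forall>w. Dw hh tt w (basis p) = 0)"
proof (cases p)
  case (Triv i)
  hence "p = word_path i [] \<and> walk hh tt i i [] \<and> arrows_in Q [] \<and> nstars [] = path_stars p"
    by (simp add: word_path_def arrows_in_def)
  thus ?thesis by blast
next
  case (Arr xs)
  hence ne: "xs \<noteq> []" and aQ: "arrows_in Q xs"
    and w: "walk hh tt (dh hh tt (hd xs)) (dt hh tt (last xs)) xs"
    using assms walk_iff_chain[of xs hh tt] by (auto simp: arrows_in_def)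
  show ?thesis
  proof (cases "closed_word hh tt xs")
    case True
    hence "p = word_path (dh hh tt (hd xs)) xs \<and> walk hh tt (dh hh tt (hd xs)) (dh hh tt (hd xs)) xs
        \<and> arrows_in Q xs \<and> nstars xs = path_stars p"
      using Arr ne aQ w by (simp add: word_path_def closed_word_def)
    thus ?thesis by blast
  next
    case False
    thus ?thesis
      using Arr by (simp add: Dw_basis Dpath_not_closed)
  qed
qed

lemma jacobiator_basis:
  assumes "valid_path I Q hh tt p1" "valid_path I Q hh tt p2" "valid_path I Q hh tt p3" "finite Q"
  shows "jacobiator Q hh tt (path_stars p1) (path_stars p2) (path_stars p3) (basis p1) (basis p2) (basis p3)
       \<in> relspan I Q hh tt"
proof (cases "\<exists>p\<in>{p1, p2, p3}. \<forall>w. Dw hh tt w (basis p) = 0")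
  case True
  thus ?thesis
    by (auto simp: jacobiator_def schouten_Dw_zero_left schouten_Dw_zero_right)
next
  case False
  then obtain v1 X1 v2 X2 v3 X3 where
      "p1 = word_path v1 X1" "walk hh tt v1 v1 X1" "arrows_in Q X1" "nstars X1 = path_stars p1"
      "p2 = word_path v2 X2" "walk hh tt v2 v2 X2" "arrows_in Q X2" "nstars X2 = path_stars p2"
      "p3 = word_path v3 X3" "walk hh tt v3 v3 X3" "arrows_in Q X3" "nstars X3 = path_stars p3"
    using valid_path_closed_walk_or_Dw_zero[OF assms(1)] valid_path_closed_walk_or_Dw_zero[OF assms(2)]
      valid_path_closed_walk_or_Dw_zero[OF assms(3)]
    by auto
  thus ?thesis
    using jacobiator_closed_walks[of hh tt v1 X1 v2 X2 v3 X3 Q I] assms(4) by metis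
qed

lemma jacobiator_sum_smul_left:
  assumes "finite S" "\<And>p. fin_supp (f p)" "fin_supp B" "fin_supp C"
  shows "jacobiator Q hh tt r s t (\<Sum>p\<in>S. smul (c p) (f p)) B C
       = (\<Sum>p\<in>S. smul (c p) (jacobiator Q hh tt r s t (f p) B C))"
  using assms
  by (simp add: jacobiator_def schouten_sum_left schouten_sum_right schouten_smul_left schouten_smul_right
      smul_sum smul_smul smul_add sum.distrib mult.commute)

lemma jacobiator_relspan_if_basis_left:
  assumes "fin_supp A" "fin_supp B" "fin_supp C"
    and "\<And>p. p \<in> supp A \<Longrightarrow> jacobiator Q hh tt r s t (basis p) B C \<in> relspan I Q hh tt"
  shows "jacobiator Q hh tt r s t A B C \<in> relspan I Q hh tt"
proof -
  have "jacobiator Q hh tt r s t A B C = jacobiator Q hh tt r s t (\<Sum>p\<in>supp A. smul (A p) (basis p)) B C"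
    using elt_eq_sum_basis[OF assms(1)] by simp
  also have "\<dots> = (\<Sum>p\<in>supp A. smul (A p) (jacobiator Q hh tt r s t (basis p) B C))"
    using assms(1-3) by (simp add: jacobiator_sum_smul_left)
  also have "\<dots> \<in> relspan I Q hh tt"
    using assms(4) by (intro relspan_sum relspan_smul)
  finally show ?thesis .
qed

lemma jacobiator_graded:
  assumes "finite Q"
    and A: "A \<in> graded I Q hh tt r" and B: "B \<in> graded I Q hh tt s" and C: "C \<in> graded I Q hh tt t"
  shows "jacobiator Q hh tt r s t A B C \<in> relspan I Q hh tt"
proof (rule jacobiator_relspan_if_basis_left)
  have fin: "fin_supp A" "fin_supp B" "fin_supp C"
    using A B C by (auto intro: graded_fin_supp)
  thus "fin_supp A" "fin_supp B" "fin_supp C" .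
  fix p1
  assume p1: "p1 \<in> supp A"
  show "jacobiator Q hh tt r s t (basis p1) B C \<in> relspan I Q hh tt"
    unfolding jacobiator_rotate[of Q hh tt r]
  proof (rule jacobiator_relspan_if_basis_left)
    fix p2
    assume p2: "p2 \<in> supp B"
    show "jacobiator Q hh tt s t r (basis p2) C (basis p1) \<in> relspan I Q hh tt"
      unfolding jacobiator_rotate[of Q hh tt s]
    proof (rule jacobiator_relspan_if_basis_left)
      fix p3
      assume p3: "p3 \<in> supp C"
      show "jacobiator Q hh tt t r s (basis p3) (basis p1) (basis p2) \<in> relspan I Q hh tt"
        using jacobiator_basis[of I Q hh tt p1 p2 p3] graded_supp[OF A p1] graded_supp[OF B p2]
          graded_supp[OF C p3] assms(1)
        by (metis jacobiator_rotate)
    qed (use fin in simp_all)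
  qed (use fin in simp_all)
qed

theorem mainTheorem1:
  fixes I :: "'v set" and Q :: "'a set" and hh tt :: "'a \<Rightarrow> 'v"
    and A B C :: "('v,'a) elt" and r s t :: nat
  assumes "finite I" and "finite Q" and "\<forall>a\<in>Q. hh a \<in> I \<and> tt a \<in> I"
    and "A \<in> graded I Q hh tt r" and "B \<in> graded I Q hh tt s" and "C \<in> graded I Q hh tt t"
  shows "((\<lambda>q. schouten Q hh tt (int r) (int s) A B q
              - (- sgnc ((int r - 1) * (int s - 1)) * schouten Q hh tt (int s) (int r) B A q))
           \<in> relspan I Q hh tt)
     \<and> ((\<lambda>q. sgnc ((int r - 1) * (int t - 1)) *
               schouten Q hh tt (int r) (int s + int t - 1) A (schouten Q hh tt (int s) (int t) B C) q
            + sgnc ((int s - 1) * (int r - 1)) *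
               schouten Q hh tt (int s) (int t + int r - 1) B (schouten Q hh tt (int t) (int r) C A) q
            + sgnc ((int t - 1) * (int s - 1)) *
               schouten Q hh tt (int t) (int r + int s - 1) C (schouten Q hh tt (int r) (int s) A B) q)
           \<in> relspan I Q hh tt)"
proof -
  have "schouten Q hh tt (int r) (int s) A B
      = - smul (sgnc ((int r - 1) * (int s - 1))) (schouten Q hh tt (int s) (int r) B A)"
    by (rule schouten_antisym)
  moreover have "jacobiator Q hh tt r s t A B C \<in> relspan I Q hh tt"
    by (rule jacobiator_graded[OF assms(2,4-6)])
  ultimately show ?thesis
    by (simp add: jacobiator_def smul_def plus_fun_def relspan.zero)
qed

end
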